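(* Let ${\mathcal M}=(E,\rho)$ be a $q$-matroid of rank $r$ on $E=\mathbb{F}_q^n$, and let $I_{{\mathcal M}}$ be its order complex. Let $\{C_i : i\in S\}$, $S=\{1,\dots,s\}$, be the $q$-circuits of ${\mathcal M}$, and for $X\subseteq S$ let $C_X$ be the $\mathbb{F}_q$-linear span of the $C_i$, $i\in X$. For $i\ge1$ and $l\ge0$ let $\lambda_{i,l}$ be the number of subsets $X\subseteq S$ with $|X|=i$ such that $C_X$ has codimension $l$ in $E$. Then $$\chi(I_{{\mathcal M}})=(-1)^{r-1}q^{\binom{n}{2}}\,\overline{\mu}({\mathcal M})+\sum_{l=1}^{n-1}\sum_{i=1}^{s}\lambda_{i,l}\sum_{j=0}^{l}(-1)^{n+i+j-1}q^{\binom{n-j}{2}}{l\brack j}_q .$$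
   Context: A $q$-matroid is a pair $(E,\rho)$, $E=\mathbb{F}_q^n$, with $\rho$ from the set of subspaces of $E$ to $\mathbb{Z}_{\ge0}$ such that $0\le\rho(X)\le\dim X$, $\rho(X)\le\rho(Y)$ whenever $X\subseteq Y$, and $\rho(X+Y)+\rho(X\cap Y)\le\rho(X)+\rho(Y)$. Its rank is $\rho(E)$; its nullity function is $\eta(X)=\dim X-\rho(X)$. A subspace $U$ is independent if $\rho(U)=\dim U$. A $q$-cycle of nullity $i$ is a minimal (under inclusion) element of $\{X:\eta(X)=i\}$; $q$-circuits are the $q$-cycles of nullity $1$. The order complex $I_{{\mathcal M}}$ is the simplicial complex whose faces are the chains $V_1\subsetneq\cdots\subsetneq V_k$ ($k\ge0$, empty chain included) of nonzero independent subspaces; its reduced Euler characteristic is $\chi(I_{{\mathcal M}})=\sum_{k\ge0}(-1)^{k-1}f_k$, where $f_k$ is the number of such chains with $k$ members. Let $L$ be the set of $q$-cycles of ${\mathcal M}$ ordered by inclusion (a lattice with minimum $0=\{0\}$ and maximum $1$); its Möbius function is defined by $\mu(x,x)=1$ and $\mu(x,y)=-\sum_{x\le z<y}\mu(x,z)$, and $\mu(L)=\mu(0,1)$. The dual $q$-matroid ${\mathcal M}^*$ has rank function $\rho^*(X)=\dim X-\rho(E)+\rho(X^\perp)$ ($\perp$ with respect to the standard bilinear form); a coloop of ${\mathcal M}$ is a one-dimensional subspace $X$ with $\rho^*(X)=0$. Set $\overline{\mu}({\mathcal M})=|\mu(L)|$ if ${\mathcal M}$ has no coloop and $\overline{\mu}({\mathcal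 M})=0$ otherwise. ${l\brack j}_q=\prod_{i=0}^{j-1}\frac{q^l-q^i}{q^j-q^i}$ is the number of $j$-dimensional subspaces of $\mathbb{F}_q^l$. *)

theory Defs
  imports "HOL-Analysis.Analysis"
begin

definition vscale :: "'a::field \<Rightarrow> 'a ^ 'n \<Rightarrow> 'a ^ 'n" where
  "vscale c v = (\<chi> i. c * v $ i)"

definition subsp :: "('a::field ^ 'n) set \<Rightarrow> bool" where
  "subsp X = module.subspace vscale X"

definition vspan :: "('a::field ^ 'n) set \<Rightarrow> ('a ^ 'n) set" where
  "vspan X = module.span vscale X"

definition vdim :: "('a::field ^ 'n) set \<Rightarrow> nat" where
  "vdim X = vector_space.dim vscale X"

definition vsum :: "('a::field ^ 'n) set \<Rightarrow> ('a ^ 'n) set \<Rightarrow> ('a ^ 'n) set" where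
  "vsum X Y = {x + y | x y. x \<in> X \<and> y \<in> Y}"

definition orth :: "('a::field ^ 'n::finite) set \<Rightarrow> ('a ^ 'n) set" where
  "orth X = {y. \<forall>x\<in>X. (\<Sum>i\<in>UNIV. x $ i * y $ i) = 0}"

definition qmatroid :: "(('a::field ^ 'n) set \<Rightarrow> nat) \<Rightarrow> bool" where
  "qmatroid rho \<longleftrightarrow>
     (\<forall>X. subsp X \<longrightarrow> rho X \<le> vdim X) \<and>
     (\<forall>X Y. subsp X \<and> subsp Y \<and> X \<subseteq> Y \<longrightarrow> rho X \<le> rho Y) \<and>
     (\<forall>X Y. subsp X \<and> subsp Y \<longrightarrow> rho (vsum X Y) + rho (X \<inter> Y) \<le> rho X + rho Y)"

definition nullity :: "(('a::field ^ 'n) set \<Rightarrow> nat) \<Rightarrow> ('a ^ 'n) set \<Rightarrow> nat" where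
  "nullity rho X = vdim X - rho X"

definition indep :: "(('a::field ^ 'n) set \<Rightarrow> nat) \<Rightarrow> ('a ^ 'n) set \<Rightarrow> bool" where
  "indep rho U \<longleftrightarrow> subsp U \<and> rho U = vdim U"

definition qcycle_of :: "(('a::field ^ 'n) set \<Rightarrow> nat) \<Rightarrow> nat \<Rightarrow> ('a ^ 'n) set \<Rightarrow> bool" where
  "qcycle_of rho i X \<longleftrightarrow> subsp X \<and> nullity rho X = i \<and>
     (\<forall>Y. subsp Y \<and> nullity rho Y = i \<and> Y \<subseteq> X \<longrightarrow> Y = X)"

definition qcycles :: "(('a::field ^ 'n) set \<Rightarrow> nat) \<Rightarrow> ('a ^ 'n) set set" where
  "qcycles rho = {X. \<exists>i. qcycle_of rho i X}"

definition qcircuits :: "(('a::field ^ 'n) set \<Rightarrow> nat) \<Rightarrow> ('a ^ 'n) set set" where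
  "qcircuits rho = {X. qcycle_of rho 1 X}"

text \<open>Faces: chains (finite sets totally ordered by inclusion) of nonzero independent subspaces,
  the empty chain included; a chain with k members contributes (-1)^(k-1).\<close>
definition order_complex :: "(('a::field ^ 'n) set \<Rightarrow> nat) \<Rightarrow> ('a ^ 'n) set set set" where
  "order_complex rho = {C. finite C \<and> (\<forall>V\<in>C. indep rho V \<and> V \<noteq> {0}) \<and>
      (\<forall>V\<in>C. \<forall>W\<in>C. V \<subseteq> W \<or> W \<subseteq> V)}"

definition euler_char :: "(('a::field ^ 'n) set \<Rightarrow> nat) \<Rightarrow> int" where
  "euler_char rho = (\<Sum>C\<in>order_complex rho. - ((-1) ^ card C))"

function mobius :: "'b::finite set set \<Rightarrow> 'b set \<Rightarrow> 'b set \<Rightarrow> int" where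
  "mobius P x y =
     (if x = y then 1
      else if x \<subset> y then - (\<Sum>z\<in>{z\<in>P. x \<subseteq> z \<and> z \<subset> y}. mobius P x z)
      else 0)"
  by auto
termination
  by (relation "Wellfounded.measure (\<lambda>(P, x, y). card y)")
     (auto intro: psubset_card_mono)

definition mu_L :: "(('a::{finite,field} ^ 'n) set \<Rightarrow> nat) \<Rightarrow> int" where
  "mu_L rho = mobius (qcycles rho) {0}
     (THE t. t \<in> qcycles rho \<and> (\<forall>c\<in>qcycles rho. c \<subseteq> t))"

definition dual_rank :: "(('a::field ^ 'n::finite) set \<Rightarrow> nat) \<Rightarrow> ('a ^ 'n) set \<Rightarrow> int" where
  "dual_rank rho X = int (vdim X) - int (rho UNIV) + int (rho (orth X))"

definition coloop :: "(('a::field ^ 'n::finite) set \<Rightarrow> nat) \<Rightarrow> ('a ^ 'n) set \<Rightarrow> bool" where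
  "coloop rho X \<longleftrightarrow> subsp X \<and> vdim X = 1 \<and> dual_rank rho X = 0"

definition mu_bar :: "(('a::{finite,field} ^ 'n::finite) set \<Rightarrow> nat) \<Rightarrow> nat" where
  "mu_bar rho = (if (\<exists>X. coloop rho X) then 0 else nat \<bar>mu_L rho\<bar>)"

definition qbinom :: "nat \<Rightarrow> nat \<Rightarrow> nat \<Rightarrow> real" where
  "qbinom q l j = (\<Prod>i<j. (real q ^ l - real q ^ i) / (real q ^ j - real q ^ i))"

definition lam :: "(('a::field ^ 'n::finite) set \<Rightarrow> nat) \<Rightarrow> nat \<Rightarrow> nat \<Rightarrow> nat" where
  "lam rho i l = card {X. X \<subseteq> qcircuits rho \<and> card X = i \<and>
       CARD('n) - vdim (vspan (\<Union>X)) = l}"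

end

theory Submission
  imports Defs
begin

text \<open>By Philip Hall's theorem, the chains of nonzero subspaces below \<open>V\<close> contribute
  \<open>\<mu>(0, V) = (-1)\<^bsup>dim V\<^esup> q\<^bsup>dim V choose 2\<^esup>\<close>, so \<open>-\<chi>(I\<^sub>M)\<close> is the sum of \<open>\<mu>(0, V)\<close> over the
  independent subspaces \<open>V\<close>. Inclusion-exclusion over the sets \<open>X\<close> of circuits contained in \<open>V\<close>
  turns this into a signed sum over \<open>X\<close> of the sums of \<open>\<mu>(0, V)\<close> over all \<open>V \<supseteq> C\<^sub>X\<close>. Such a sum
  only depends on the codimension \<open>l\<close> of \<open>C\<^sub>X\<close> and is computed by counting superspaces with
  Gaussian binomials: it vanishes for \<open>l = n\<close> and gives the \<open>\<lambda>\<^bsub>i,l\<^esub>\<close> terms for \<open>0 < l < n\<close>. For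
  \<open>C\<^sub>X = E\<close>, the alternating count of the spanning sets of circuits is \<open>\<mu>(L)\<close> by the crosscut
  theorem, the circuits being the atoms of the lattice \<open>L\<close> of cycles; Rota's sign theorem, proved via
  Weisner's theorem, gives it the sign \<open>(-1)\<^bsup>n-r\<^esup>\<close>. If there is a coloop, all circuits lie in a
  hyperplane and no set of them spans \<open>E\<close>.\<close>

section \<open>Subspaces of \<open>'a^'n\<close>\<close>

lemma vscale_eq_scale: "vscale = (*s)"
  by (intro ext) (simp add: vscale_def vector_scalar_mult_def)

lemma subsp_vec: "subsp X = vec.subspace X"
  by (simp add: subsp_def vscale_eq_scale)

lemma vdim_vec: "vdim X = vec.dim X"
  by (simp add: vdim_def vscale_eq_scale)

lemma vspan_vec: "vspan X = vec.span X"
  by (simp add: vspan_def vscale_eq_scale)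

lemma subsp_0: "subsp X \<Longrightarrow> 0 \<in> X"
  unfolding subsp_vec by (rule vec.subspace_0)

lemma subsp_zero: "subsp {0}"
  unfolding subsp_vec by (rule vec.subspace_single_0)

lemma subsp_UNIV: "subsp UNIV"
  unfolding subsp_vec by (rule vec.subspace_UNIV)

lemma subsp_Int: "subsp X \<Longrightarrow> subsp Y \<Longrightarrow> subsp (X \<inter> Y)"
  unfolding subsp_vec by (rule vec.subspace_inter)

lemma subsp_span: "subsp (vec.span S)"
  unfolding subsp_vec by (rule vec.subspace_span)

lemma subsp_vspan: "subsp (vspan S)"
  by (simp add: vspan_vec subsp_span)

lemma span_subsp_eq: "subsp X \<Longrightarrow> vec.span X = X"
  unfolding subsp_vec by (rule vec.span_eq_iff[THEN iffD2])

lemma span_subset_subsp: "subsp Y \<Longrightarrow> S \<subseteq> Y \<Longrightarrow> vec.span S \<subseteq> Y"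
  unfolding subsp_vec by (rule vec.span_minimal[rotated])

lemma vspan_Union_subset: "subsp Y \<Longrightarrow> (\<And>C. C \<in> X \<Longrightarrow> C \<subseteq> Y) \<Longrightarrow> vspan (\<Union>X) \<subseteq> Y"
  unfolding vspan_vec by (rule span_subset_subsp) auto

lemma subset_vspan_Union: "C \<in> X \<Longrightarrow> C \<subseteq> vspan (\<Union>X)"
  unfolding vspan_vec using vec.span_superset by blast

lemma vsum_subsp: "subsp X \<Longrightarrow> subsp Y \<Longrightarrow> subsp (vsum X Y)"
  unfolding subsp_vec vsum_def by (rule vec.subspace_sums)

lemma vdim_vsum_Int: "subsp X \<Longrightarrow> subsp Y \<Longrightarrow> vdim (vsum X Y) + vdim (X \<inter> Y) = vdim X + vdim Y"
  unfolding subsp_vec vsum_def vdim_vec by (rule vec.dim_sums_Int)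

lemma vsum_least: "subsp X \<Longrightarrow> subsp Y \<Longrightarrow> subsp Z \<Longrightarrow> X \<subseteq> Z \<Longrightarrow> Y \<subseteq> Z \<Longrightarrow> vsum X Y \<subseteq> Z"
  unfolding subsp_vec vsum_def using vec.subspace_add by blast

lemma vsum_upper1: "subsp Y \<Longrightarrow> X \<subseteq> vsum X Y"
  unfolding subsp_vec vsum_def using vec.subspace_0 by force

lemma vsum_upper2: "subsp X \<Longrightarrow> Y \<subseteq> vsum X Y"
  unfolding subsp_vec vsum_def using vec.subspace_0 by force

lemma vdim_UNIV: "vdim (UNIV :: ('a::field^'n) set) = CARD('n)"
  using vec_dim_card[where 'a='a and 'n='n] by (simp add: vdim_vec)

lemma vdim_zero [simp]: "vdim {0} = 0"
  by (simp add: vdim_vec)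

lemma vdim_mono: "X \<subseteq> Y \<Longrightarrow> vdim X \<le> vdim Y"
  unfolding vdim_vec by (rule vec.dim_subset)

lemma vdim_le_CARD: "vdim (X :: ('a::field^'n) set) \<le> CARD('n)"
  by (metis vdim_UNIV vdim_mono subset_UNIV)

lemma subsp_dim_equal: "subsp X \<Longrightarrow> subsp Y \<Longrightarrow> X \<subseteq> Y \<Longrightarrow> vdim Y \<le> vdim X \<Longrightarrow> X = Y"
  unfolding subsp_vec vdim_vec by (rule vec.subspace_dim_equal)

lemma vdim_psubset: "subsp X \<Longrightarrow> subsp Y \<Longrightarrow> X \<subset> Y \<Longrightarrow> vdim X < vdim Y"
  using subsp_dim_equal[of X Y] vdim_mono[of X Y] by fastforce

lemma vdim_eq_0_iff: "subsp X \<Longrightarrow> vdim X = 0 \<longleftrightarrow> X = {0}"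
  unfolding vdim_vec using subsp_0 vec.dim_eq_0 by fastforce

lemma UNIV_neq_zero: "(UNIV :: ('a::field^'n) set) \<noteq> {0}"
  using vdim_UNIV[where 'a='a and 'n='n] by (metis vdim_zero zero_less_card_finite less_irrefl)

lemma vdim_span_insert:
  "subsp X \<Longrightarrow> y \<notin> X \<Longrightarrow> vdim (vec.span (insert y X)) = Suc (vdim X)"
  by (simp add: vdim_vec vec.dim_insert span_subsp_eq)

lemma exists_intermediate_subsp:
  assumes X: "subsp X" and Y: "subsp Y" and XY: "X \<subseteq> Y" and k: "vdim X \<le> k" "k \<le> vdim Y"
  shows "\<exists>Z. subsp Z \<and> X \<subseteq> Z \<and> Z \<subseteq> Y \<and> vdim Z = k"
  using k
proof (induction k rule: dec_induct)
  case base
  then show ?case using X XY by blast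
next
  case (step m)
  then obtain Z where Z: "subsp Z" "X \<subseteq> Z" "Z \<subseteq> Y" "vdim Z = m" by auto
  moreover have "Z \<noteq> Y" using Z step by auto
  ultimately obtain y where y: "y \<in> Y" "y \<notin> Z" by auto
  let ?Z = "vec.span (insert y Z)"
  have "X \<subseteq> ?Z" using Z vec.span_superset by blast
  moreover have "?Z \<subseteq> Y" using Y y Z by (simp add: span_subset_subsp)
  moreover have "vdim ?Z = Suc m" using Z y by (simp add: vdim_span_insert)
  ultimately show ?case using subsp_span by blast
qed

lemma card_span_insert:
  fixes T :: "('a::{finite,field}^'n) set"
  assumes T: "subsp T" and y: "y \<notin> T"
  shows "card (vec.span (insert y T)) = CARD('a) * card T"
proof -
  let ?f = "\<lambda>(k, t). k *s y + t"
  have "vec.span (insert y T) = ?f ` (UNIV \<times> T)"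
  proof (rule set_eqI)
    fix x
    show "x \<in> vec.span (insert y T) \<longleftrightarrow> x \<in> ?f ` (UNIV \<times> T)"
      unfolding vec.span_insert span_subsp_eq[OF T]
    proof
      assume "x \<in> {x. \<exists>k. x - k *s y \<in> T}"
      then obtain k where "x - k *s y \<in> T" by blast
      then show "x \<in> ?f ` (UNIV \<times> T)" by (intro image_eqI[of _ _ "(k, x - k *s y)"]) auto
    next
      assume "x \<in> ?f ` (UNIV \<times> T)"
      then obtain k t where "x = k *s y + t" "t \<in> T" by auto
      then show "x \<in> {x. \<exists>k. x - k *s y \<in> T}" by (intro CollectI exI[of _ k]) simp
    qed
  qed
  moreover have "inj_on ?f (UNIV \<times> T)"
  proof (rule inj_onI, clarify)
    fix k t k' t'
    assume t: "t \<in> T" "t' \<in> T" and eq: "k *s y + t = k' *s y + t'"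
    have "k = k'"
    proof (rule ccontr)
      assume "k \<noteq> k'"
      have diff: "(k - k') *s y = t' - t"
        using eq by (simp add: algebra_simps vec.scale_left_diff_distrib)
      have "y = inverse (k - k') *s ((k - k') *s y)"
        using \<open>k \<noteq> k'\<close> by (simp only: vec.scale_scale) simp
      also have "\<dots> \<in> T"
        unfolding diff using T t unfolding subsp_vec by (simp add: vec.subspace_diff vec.subspace_scale)
      finally show False using y by simp
    qed
    then show "k = k' \<and> t = t'" using eq by simp
  qed
  ultimately show ?thesis by (simp add: card_image card_cartesian_product)
qed

lemma card_subsp:
  fixes X :: "('a::{finite,field}^'n) set"
  assumes "subsp X"
  shows "card X = CARD('a) ^ vdim X"
  using assms
proof (induction "vdim X" arbitrary: X)
  case 0
  then show ?case by (simp add: vdim_eq_0_iff)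
next
  case (Suc d)
  obtain T where T: "subsp T" "T \<subseteq> X" "vdim T = d"
    using exists_intermediate_subsp[OF subsp_zero Suc.prems _, of d] Suc.hyps(2) subsp_0[OF Suc.prems]
    by auto
  moreover have "T \<noteq> X" using T Suc.hyps(2) by auto
  ultimately obtain y where y: "y \<in> X" "y \<notin> T" by auto
  have "vec.span (insert y T) = X"
    using subsp_dim_equal[OF subsp_span Suc.prems] span_subset_subsp[OF Suc.prems] T y
      vdim_span_insert[OF T(1) y(2)] Suc.hyps(2) by simp
  then show ?case using card_span_insert[OF T(1) y(2)] Suc.hyps(1)[OF T(3)[symmetric] T(1)] T(3)
    by (simp flip: Suc.hyps(2))
qed

lemma card_field_ge2: "2 \<le> CARD('a::{finite,field})"
proof -
  have "card {0::'a, 1} \<le> CARD('a)" by (rule card_mono) auto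
  then show ?thesis by simp
qed

section \<open>Orthogonal complements\<close>

definition dotp :: "'a::field^'n \<Rightarrow> 'a^'n \<Rightarrow> 'a" where
  "dotp x y = (\<Sum>i\<in>UNIV. x $ i * y $ i)"

lemma orth_dotp: "orth X = {y. \<forall>x\<in>X. dotp x y = 0}"
  by (simp add: orth_def dotp_def)

lemma dotp_comm: "dotp x y = dotp y x"
  by (simp add: dotp_def mult.commute)

lemma dotp_add_left: "dotp (x + x') y = dotp x y + dotp x' y"
  by (simp add: dotp_def algebra_simps sum.distrib)

lemma dotp_scale_left: "dotp (c *s x) y = c * dotp x y"
  by (simp add: dotp_def algebra_simps sum_distrib_left)

lemma dotp_zero_left [simp]: "dotp 0 y = 0"
  by (simp add: dotp_def)

lemma dotp_zero_right [simp]: "dotp y 0 = 0"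
  by (simp add: dotp_def)

lemma dotp_add_right: "dotp y (x + x') = dotp y x + dotp y x'"
  by (simp add: dotp_def algebra_simps sum.distrib)

lemma dotp_diff_right: "dotp y (x - x') = dotp y x - dotp y x'"
  by (simp add: dotp_def algebra_simps sum_subtractf)

lemma dotp_scale_right: "dotp y (c *s x) = c * dotp y x"
  by (simp add: dotp_def algebra_simps sum_distrib_left)

lemma subsp_orth: "subsp (orth X)"
  unfolding subsp_vec orth_dotp vec.subspace_def
  by (auto simp: dotp_add_right dotp_scale_right)

lemma orth_antimono: "X \<subseteq> Y \<Longrightarrow> orth Y \<subseteq> orth X"
  unfolding orth_dotp by auto

lemma orth_span: "orth (vec.span B) = orth B"
proof
  show "orth (vec.span B) \<subseteq> orth B" by (rule orth_antimono[OF vec.span_superset])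
  show "orth B \<subseteq> orth (vec.span B)"
  proof
    fix y assume y: "y \<in> orth B"
    have "vec.subspace {x. dotp x y = 0}"
      unfolding vec.subspace_def by (auto simp: dotp_add_left dotp_scale_left)
    then have "vec.span B \<subseteq> {x. dotp x y = 0}"
      using y unfolding orth_dotp by (intro vec.span_minimal) auto
    then show "y \<in> orth (vec.span B)" unfolding orth_dotp by auto
  qed
qed

lemma subset_orth_orth: "X \<subseteq> orth (orth X)"
  unfolding orth_dotp by (auto simp: dotp_comm)

interpretation vec_pair: vector_space_pair "(*s) :: 'a::field \<Rightarrow> 'a^'n \<Rightarrow> 'a^'n" "(*) :: 'a \<Rightarrow> 'a \<Rightarrow> 'a" ..

lemma exists_dotp_eq:
  fixes B :: "('a::field^'n) set"
  assumes B: "vec.independent B"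
  shows "\<exists>y. \<forall>b\<in>B. dotp b y = g b"
proof -
  define f where "f = vec_pair.construct B g"
  have lin: "Vector_Spaces.linear (*s) (*) f"
    unfolding f_def by (rule vec_pair.linear_construct[OF B])
  have "dotp c (\<chi> i. f (axis i 1)) = f c" for c
  proof -
    have "f c = f (\<Sum>i\<in>UNIV. (c $ i) *s axis i 1)" by (simp add: basis_expansion)
    also have "\<dots> = (\<Sum>i\<in>UNIV. c $ i * f (axis i 1))"
      by (simp add: vec_pair.linear_sum[OF lin] vec_pair.linear_scale[OF lin])
    finally show ?thesis by (simp add: dotp_def)
  qed
  moreover have "f b = g b" if "b \<in> B" for b
    unfolding f_def using that by (rule vec_pair.construct_basis[OF B])
  ultimately show ?thesis by (intro exI[of _ "\<chi> i. f (axis i 1)"]) simp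
qed

lemma card_UNIV_by_fibres:
  fixes f :: "'b::finite \<Rightarrow> 'c"
  assumes "\<And>y. card (f -` {f y}) = c"
  shows "CARD('b) = card (range f) * c"
proof -
  have "UNIV = (\<Union>g\<in>range f. f -` {g})" by auto
  then have "CARD('b) = card (\<Union>g\<in>range f. f -` {g})" by simp
  also have "\<dots> = (\<Sum>g\<in>range f. card (f -` {g}))" by (rule card_UN_disjoint) auto
  also have "\<dots> = (\<Sum>g\<in>range f. c)" by (intro sum.cong) (auto simp: assms)
  also have "\<dots> = card (range f) * c" by simp
  finally show ?thesis .
qed

text \<open>For a basis \<open>B\<close> of \<open>X\<close>, the map \<open>y \<mapsto> (\<lambda>b\<in>B. dotp b y)\<close> is onto \<open>B \<rightarrow>\<^sub>E UNIV\<close> and its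
  fibres are cosets of \<open>orth X\<close>, so \<open>q\<^sup>n = q\<^bsup>|B|\<^esup> * |orth X|\<close>.\<close>
lemma vdim_orth:
  fixes X :: "('a::{finite,field}^'n) set"
  assumes X: "subsp X"
  shows "vdim (orth X) + vdim X = CARD('n)"
proof -
  obtain B where B: "finite B" "vec.independent B" "vec.span B = X" "card B = vdim X"
    using vec.basis_subspace_exists[of X] X unfolding subsp_vec vdim_vec by metis
  define F where "F y = (\<lambda>b. if b \<in> B then dotp b y else undefined)" for y :: "'a^'n"
  have "range F = B \<rightarrow>\<^sub>E UNIV"
  proof
    show "range F \<subseteq> B \<rightarrow>\<^sub>E UNIV" by (auto simp: F_def PiE_def extensional_def)
    show "B \<rightarrow>\<^sub>E UNIV \<subseteq> range F"
    proof
      fix g :: "'a^'n \<Rightarrow> 'a" assume g: "g \<in> B \<rightarrow>\<^sub>E UNIV"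
      obtain y where "\<forall>b\<in>B. dotp b y = g b" using exists_dotp_eq[OF B(2)] by blast
      then have "g = F y" using g by (auto simp: F_def PiE_def extensional_def)
      then show "g \<in> range F" by (rule range_eqI)
    qed
  qed
  then have range: "card (range F) = CARD('a) ^ vdim X" using B(1,4) by (simp add: card_PiE)
  have fibre: "card (F -` {F y0}) = CARD('a) ^ vdim (orth X)" for y0
  proof -
    have "F -` {F y0} = (\<lambda>k. y0 + k) ` orth B"
    proof
      show "F -` {F y0} \<subseteq> (\<lambda>k. y0 + k) ` orth B"
      proof
        fix y assume "y \<in> F -` {F y0}"
        then have "dotp b y = dotp b y0" if "b \<in> B" for b
          using that unfolding F_def by (metis (mono_tags) vimage_singleton_eq)
        then have "y - y0 \<in> orth B" by (auto simp: orth_dotp dotp_diff_right)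
        then show "y \<in> (\<lambda>k. y0 + k) ` orth B" by (intro image_eqI[of _ _ "y - y0"]) auto
      qed
      show "(\<lambda>k. y0 + k) ` orth B \<subseteq> F -` {F y0}"
        by (auto simp: F_def orth_dotp fun_eq_iff dotp_add_right)
    qed
    then show ?thesis
      using orth_span[of B] B(3) card_subsp[OF subsp_orth, of X] by (simp add: card_image)
  qed
  have "CARD('a) ^ CARD('n) = CARD('a) ^ (vdim X + vdim (orth X))"
    using card_UNIV_by_fibres[of F, OF fibre] card_subsp[OF subsp_UNIV] vdim_UNIV[where 'a='a and 'n='n]
    unfolding range by (simp add: power_add)
  then show ?thesis using power_inject_exp card_field_ge2[where 'a='a] by simp
qed

lemma orth_orth:
  fixes X :: "('a::{finite,field}^'n) set"
  assumes X: "subsp X"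
  shows "orth (orth X) = X"
  using vdim_orth[OF X] vdim_orth[OF subsp_orth, of X]
    subsp_dim_equal[OF X subsp_orth subset_orth_orth] by simp

section \<open>Counting subspaces\<close>

fun indep_list :: "('a::field^'n) list \<Rightarrow> bool" where
  "indep_list [] = True"
| "indep_list (v # vs) \<longleftrightarrow> v \<notin> vec.span (set vs) \<and> indep_list vs"

lemma vdim_span_indep_list: "indep_list vs \<Longrightarrow> vdim (vec.span (set vs)) = length vs"
proof (induction vs)
  case (Cons v vs)
  then show ?case by (simp add: vdim_vec vec.dim_insert)
qed (simp add: vdim_vec)

definition indep_lists :: "('a::field^'n) set \<Rightarrow> nat \<Rightarrow> ('a^'n) list set" where
  "indep_lists U k = {vs. length vs = k \<and> set vs \<subseteq> U \<and> indep_list vs}"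

lemma finite_indep_lists: "finite (indep_lists (U :: ('a::{finite,field}^'n) set) k)"
proof (rule finite_subset)
  show "indep_lists U k \<subseteq> {xs. set xs \<subseteq> UNIV \<and> length xs = k}"
    unfolding indep_lists_def by auto
qed (rule finite_lists_length_eq, simp)

lemma indep_lists_Suc:
  "indep_lists U (Suc k) = (\<Union>vs\<in>indep_lists U k. (\<lambda>v. v # vs) ` (U - vec.span (set vs)))"
proof (rule set_eqI)
  fix xs
  show "xs \<in> indep_lists U (Suc k) \<longleftrightarrow> xs \<in> (\<Union>vs\<in>indep_lists U k. (\<lambda>v. v # vs) ` (U - vec.span (set vs)))"
    by (cases xs) (auto simp: indep_lists_def)
qed

lemma card_indep_lists:
  fixes U :: "('a::{finite,field}^'n) set"
  assumes U: "subsp U"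
  shows "card (indep_lists U k) = (\<Prod>i<k. CARD('a) ^ vdim U - CARD('a) ^ i)"
proof (induction k)
  case 0
  have "indep_lists U 0 = {[]}" by (auto simp: indep_lists_def)
  then show ?case by simp
next
  case (Suc k)
  have "card ((\<lambda>v. v # vs) ` (U - vec.span (set vs))) = CARD('a) ^ vdim U - CARD('a) ^ k"
    if vs: "vs \<in> indep_lists U k" for vs
  proof -
    have "vec.span (set vs) \<subseteq> U" using vs U unfolding indep_lists_def by (simp add: span_subset_subsp)
    moreover have "vdim (vec.span (set vs)) = k"
      using vs vdim_span_indep_list unfolding indep_lists_def by auto
    ultimately show ?thesis
      using card_subsp[OF U] card_subsp[OF subsp_span[of "set vs"]]
      by (simp add: card_image inj_on_def card_Diff_subset)
  qed
  then have "card (indep_lists U (Suc k)) = card (indep_lists U k) * (CARD('a) ^ vdim U - CARD('a) ^ k)"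
    unfolding indep_lists_Suc by (subst card_UN_disjoint) (auto simp: finite_indep_lists)
  then show ?case using Suc.IH by (simp add: mult.commute)
qed

lemma span_eq_if_in_indep_lists_vdim:
  fixes U :: "('a::field^'n) set"
  assumes U: "subsp U" and vs: "vs \<in> indep_lists U (vdim U)"
  shows "vec.span (set vs) = U"
  using subsp_dim_equal[OF subsp_span U] vs U vdim_span_indep_list[of vs]
  unfolding indep_lists_def by (simp add: span_subset_subsp)

text \<open>Double counting of the independent \<open>j\<close>-lists in \<open>U\<close>, grouped by the subspace they span.\<close>
lemma card_subspaces_of_dim_mult:
  fixes U :: "('a::{finite,field}^'n) set"
  assumes U: "subsp U"
  shows "card {V. subsp V \<and> V \<subseteq> U \<and> vdim V = j} * (\<Prod>i<j. CARD('a) ^ j - CARD('a) ^ i)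
         = (\<Prod>i<j. CARD('a) ^ vdim U - CARD('a) ^ i)"
proof -
  let ?S = "{V. subsp V \<and> V \<subseteq> U \<and> vdim V = j}"
  have "indep_lists U j = (\<Union>V\<in>?S. indep_lists V j)"
  proof (intro equalityI subsetI)
    fix vs assume vs: "vs \<in> indep_lists U j"
    then have "vec.span (set vs) \<in> ?S" "vs \<in> indep_lists (vec.span (set vs)) j"
      using U vdim_span_indep_list[of vs] subsp_span vec.span_superset
      by (auto simp: indep_lists_def span_subset_subsp)
    then show "vs \<in> (\<Union>V\<in>?S. indep_lists V j)" by blast
  qed (auto simp: indep_lists_def)
  moreover have "indep_lists V j \<inter> indep_lists W j = {}" if "V \<in> ?S" "W \<in> ?S" "V \<noteq> W" for V W
    using that span_eq_if_in_indep_lists_vdim[of V] span_eq_if_in_indep_lists_vdim[of W] by auto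
  ultimately have "card (indep_lists U j) = (\<Sum>V\<in>?S. card (indep_lists V j))"
    by (simp add: card_UN_disjoint finite_indep_lists)
  also have "\<dots> = card ?S * (\<Prod>i<j. CARD('a) ^ j - CARD('a) ^ i)"
    by (simp add: card_indep_lists)
  finally show ?thesis using card_indep_lists[OF U, of j] by simp
qed

definition qfact :: "nat \<Rightarrow> nat \<Rightarrow> real" where
  "qfact q m = (\<Prod>t<m. real q ^ Suc t - 1)"

lemma qfact_0 [simp]: "qfact q 0 = 1"
  by (simp add: qfact_def)

lemma qfact_Suc: "qfact q (Suc m) = qfact q m * (real q ^ Suc m - 1)"
  by (simp add: qfact_def)

lemma qpow_minus_one_pos: "2 \<le> q \<Longrightarrow> 1 \<le> m \<Longrightarrow> real q ^ m - 1 > 0"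
  using power_increasing[of 1 m "real q"] by simp

lemma qfact_pos: "2 \<le> q \<Longrightarrow> qfact q m > 0"
  unfolding qfact_def by (intro prod_pos ballI qpow_minus_one_pos) auto

lemma prod_qpow_diff:
  assumes "k \<le> m"
  shows "(\<Prod>i<k. real q ^ m - real q ^ i) = (\<Prod>i<k. real q ^ i) * (\<Prod>i<k. real q ^ (m - i) - 1)"
proof -
  have "real q ^ m - real q ^ i = real q ^ i * (real q ^ (m - i) - 1)" if "i < k" for i
    using that assms by (simp add: algebra_simps flip: power_add)
  then have "(\<Prod>i<k. real q ^ m - real q ^ i) = (\<Prod>i<k. real q ^ i * (real q ^ (m - i) - 1))"
    by (intro prod.cong) auto
  then show ?thesis by (simp add: prod.distrib)
qed

lemma prod_qpow_minus_one_qfact: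
  "k \<le> d \<Longrightarrow> (\<Prod>i<k. real q ^ (d - i) - 1) * qfact q (d - k) = qfact q d"
proof (induction k)
  case (Suc k)
  then have "qfact q (d - k) = qfact q (d - Suc k) * (real q ^ (d - k) - 1)"
    using qfact_Suc[of q "d - Suc k"] by (simp add: Suc_diff_Suc)
  then show ?case using Suc by (simp add: mult_ac)
qed simp

lemma qbinom_eq_qfact:
  assumes q: "2 \<le> q" and kd: "k \<le> d"
  shows "qbinom q d k = qfact q d / (qfact q k * qfact q (d - k))"
proof -
  have pos: "(\<Prod>i<k. real q ^ i) > 0" using q by (intro prod_pos) simp
  have "qbinom q d k = (\<Prod>i<k. real q ^ d - real q ^ i) / (\<Prod>i<k. real q ^ k - real q ^ i)"
    unfolding qbinom_def by (rule prod_dividef)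
  also have "\<dots> = (\<Prod>i<k. real q ^ (d - i) - 1) / (\<Prod>i<k. real q ^ (k - i) - 1)"
    unfolding prod_qpow_diff[OF kd] prod_qpow_diff[OF order.refl] using pos q by simp
  also have "(\<Prod>i<k. real q ^ (k - i) - 1) = qfact q k"
    using prod_qpow_minus_one_qfact[of k k q] by simp
  also have "(\<Prod>i<k. real q ^ (d - i) - 1) = qfact q d / qfact q (d - k)"
    using prod_qpow_minus_one_qfact[OF kd, of q] qfact_pos[OF q, of "d - k"] by (simp add: eq_divide_eq)
  finally show ?thesis by (simp add: mult.commute)
qed

lemma qbinom_0 [simp]: "qbinom q d 0 = 1"
  by (simp add: qbinom_def)

lemma qbinom_eq_0: "d < k \<Longrightarrow> qbinom q d k = 0"
  unfolding qbinom_def by (intro prod_zero) (auto intro!: bexI[of _ d])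

lemma qbinom_self: "2 \<le> q \<Longrightarrow> qbinom q m m = 1"
  using qbinom_eq_qfact[of q m m] qfact_pos[of q m] by simp

lemma qbinom_Suc_Suc:
  assumes q: "2 \<le> q" and k: "k \<le> d"
  shows "qbinom q (Suc d) (Suc k) = qbinom q d (Suc k) + real q ^ (d - k) * qbinom q d k"
proof (cases "k = d")
  case True
  then show ?thesis using qbinom_self[OF q] qbinom_eq_0[of d "Suc d" q] by simp
next
  case False
  then have kd: "Suc k \<le> d" using k by simp
  define a b c where "a = qfact q k" and "b = qfact q (d - Suc k)" and "c = qfact q d"
  define u v where "u = real q ^ Suc k - 1" and "v = real q ^ (d - k) - 1"
  have "u > 0" unfolding u_def by (rule qpow_minus_one_pos[OF q]) simp
  moreover have "v > 0" unfolding v_def by (rule qpow_minus_one_pos[OF q]) (use kd in simp)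
  ultimately have pos: "a > 0" "b > 0" "c > 0" "u > 0" "v > 0"
    using qfact_pos[OF q] by (auto simp: a_def b_def c_def)
  have "qfact q (d - k) = b * v"
    unfolding b_def v_def using qfact_Suc[of q "d - Suc k"] kd by (simp add: Suc_diff_Suc)
  moreover have "real q ^ Suc d - 1 = (v + 1) * (u + 1) - 1"
    using kd by (simp add: u_def v_def flip: power_add)
  ultimately have L: "qbinom q (Suc d) (Suc k) = c * ((v + 1) * (u + 1) - 1) / (a * u * (b * v))"
    using qbinom_eq_qfact[OF q, of "Suc k" "Suc d"] k by (simp add: qfact_Suc a_def c_def u_def)
  have R1: "qbinom q d (Suc k) = c / (a * u * b)"
    using qbinom_eq_qfact[OF q kd] by (simp add: qfact_Suc a_def b_def c_def u_def)
  have R2: "qbinom q d k = c / (a * (b * v))"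
    using qbinom_eq_qfact[OF q k] \<open>qfact q (d - k) = b * v\<close> by (simp add: a_def c_def)
  have "real q ^ (d - k) = v + 1" by (simp add: v_def)
  then show ?thesis unfolding L R1 R2 using pos by (simp add: field_simps)
qed

theorem qbinomial_theorem:
  assumes q: "2 \<le> q"
  shows "(\<Sum>k\<le>d. qbinom q d k * real q ^ (k choose 2) * x ^ k) = (\<Prod>i<d. 1 + real q ^ i * x)"
proof (induction d)
  case (Suc d)
  define c where "c k = real q ^ (k choose 2) * x ^ k" for k
  have shift: "real q ^ (d - m) * qbinom q d m * c (Suc m) = real q ^ d * x * (qbinom q d m * c m)"
    if "m \<le> d" for m
  proof -
    have "real q ^ (d - m) * real q ^ m = real q ^ d" using that by (simp flip: power_add)
    then show ?thesis by (simp add: c_def power_add algebra_simps numeral_2_eq_2)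
  qed
  have "(\<Sum>k\<le>Suc d. qbinom q (Suc d) k * c k) = c 0 + (\<Sum>m\<le>d. qbinom q (Suc d) (Suc m) * c (Suc m))"
    by (subst sum.atMost_Suc_shift) simp
  also have "(\<Sum>m\<le>d. qbinom q (Suc d) (Suc m) * c (Suc m))
      = (\<Sum>m\<le>d. qbinom q d (Suc m) * c (Suc m) + real q ^ (d - m) * qbinom q d m * c (Suc m))"
    by (intro sum.cong refl) (simp add: qbinom_Suc_Suc[OF q] distrib_right)
  also have "c 0 + \<dots> = (c 0 + (\<Sum>m\<le>d. qbinom q d (Suc m) * c (Suc m)))
      + (\<Sum>m\<le>d. real q ^ (d - m) * qbinom q d m * c (Suc m))"
    by (simp add: sum.distrib)
  also have "c 0 + (\<Sum>m\<le>d. qbinom q d (Suc m) * c (Suc m)) = (\<Sum>k\<le>d. qbinom q d k * c k)"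
  proof -
    have "(\<Sum>k\<le>d. qbinom q d k * c k) = (\<Sum>k\<le>Suc d. qbinom q d k * c k)"
      using qbinom_eq_0[of d "Suc d" q] by simp
    also have "\<dots> = c 0 + (\<Sum>m\<le>d. qbinom q d (Suc m) * c (Suc m))"
      by (subst sum.atMost_Suc_shift) simp
    finally show ?thesis by simp
  qed
  also have "(\<Sum>m\<le>d. real q ^ (d - m) * qbinom q d m * c (Suc m)) = real q ^ d * x * (\<Sum>k\<le>d. qbinom q d k * c k)"
    unfolding sum_distrib_left by (intro sum.cong refl) (simp add: shift)
  finally show ?case using Suc.IH by (simp add: c_def algebra_simps mult.assoc)
qed (simp add: binomial_eq_0)

lemma of_nat_prod_qpow_diff:
  assumes "k \<le> m" and "0 < q"
  shows "real (\<Prod>i<k. q ^ m - q ^ i) = (\<Prod>i<k. real q ^ m - real q ^ i)"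
proof -
  have "real (q ^ m - q ^ i) = real q ^ m - real q ^ i" if "i < k" for i
  proof -
    have "q ^ i \<le> q ^ m" using that assms by (intro power_increasing) auto
    then show ?thesis by (simp add: of_nat_diff)
  qed
  then show ?thesis by (simp add: of_nat_prod)
qed

lemma card_subspaces_of_dim:
  fixes U :: "('a::{finite,field}^'n) set"
  assumes U: "subsp U"
  shows "real (card {V. subsp V \<and> V \<subseteq> U \<and> vdim V = j}) = qbinom CARD('a) (vdim U) j"
proof (cases "j \<le> vdim U")
  case True
  let ?q = "real CARD('a)"
  have "(\<Prod>i<j. ?q ^ j - ?q ^ i) \<noteq> 0"
    using power_strict_increasing[of _ j ?q] card_field_ge2[where 'a='a] by (simp add: prod_zero_iff)
  moreover have "real (card {V. subsp V \<and> V \<subseteq> U \<and> vdim V = j}) * (\<Prod>i<j. ?q ^ j - ?q ^ i)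
      = (\<Prod>i<j. ?q ^ vdim U - ?q ^ i)"
    using arg_cong[OF card_subspaces_of_dim_mult[OF U, of j], of real] True
    by (simp only: of_nat_mult of_nat_prod_qpow_diff order.refl zero_less_card_finite)
  ultimately show ?thesis unfolding qbinom_def prod_dividef by (simp add: eq_divide_eq)
next
  case False
  then have "{V. subsp V \<and> V \<subseteq> U \<and> vdim V = j} = {}" using vdim_mono[of _ U] by force
  then show ?thesis using False by (simp add: qbinom_eq_0)
qed

lemma sum_subspaces_by_dim:
  fixes V :: "('a::{finite,field}^'n) set"
  assumes V: "subsp V"
  shows "(\<Sum>U | subsp U \<and> U \<subseteq> V. f (vdim U)) = (\<Sum>k\<le>vdim V. qbinom CARD('a) (vdim V) k * f k)"
proof -
  let ?S = "{U. subsp U \<and> U \<subseteq> V}"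
  have "(\<Sum>U\<in>?S. f (vdim U)) = (\<Sum>k\<le>vdim V. \<Sum>U\<in>{U \<in> ?S. vdim U = k}. f (vdim U))"
    by (rule sum.group[symmetric]) (auto intro: vdim_mono)
  also have "\<dots> = (\<Sum>k\<le>vdim V. qbinom CARD('a) (vdim V) k * f k)"
  proof (intro sum.cong refl)
    fix k
    have "{U \<in> ?S. vdim U = k} = {U. subsp U \<and> U \<subseteq> V \<and> vdim U = k}" by auto
    then show "(\<Sum>U\<in>{U \<in> ?S. vdim U = k}. f (vdim U)) = qbinom CARD('a) (vdim V) k * f k"
      by (simp flip: card_subspaces_of_dim[OF V])
  qed
  finally show ?thesis .
qed

lemma card_superspaces_of_codim:
  fixes W :: "('a::{finite,field}^'n) set"
  assumes W: "subsp W" and j: "j \<le> CARD('n)"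
  shows "real (card {V. subsp V \<and> W \<subseteq> V \<and> vdim V = CARD('n) - j})
       = qbinom CARD('a) (CARD('n) - vdim W) j"
proof -
  let ?A = "{V. subsp V \<and> W \<subseteq> V \<and> vdim V = CARD('n) - j}"
  let ?B = "{U. subsp U \<and> U \<subseteq> orth W \<and> vdim U = j}"
  have "bij_betw orth ?A ?B"
  proof (rule bij_betw_byWitness[where f' = orth])
    show "\<forall>V\<in>?A. orth (orth V) = V" "\<forall>U\<in>?B. orth (orth U) = U" using orth_orth by blast+
    show "orth ` ?A \<subseteq> ?B"
    proof clarify
      fix V assume V: "subsp V" "W \<subseteq> V" "vdim V = CARD('n) - j"
      moreover have "vdim (orth V) = j" using vdim_orth[OF V(1)] V(3) j by arith
      ultimately show "subsp (orth V) \<and> orth V \<subseteq> orth W \<and> vdim (orth V) = j"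
        using subsp_orth orth_antimono[OF V(2)] by simp
    qed
    show "orth ` ?B \<subseteq> ?A"
    proof (rule image_subsetI)
      fix U assume "U \<in> ?B"
      then have U: "subsp U" "U \<subseteq> orth W" "vdim U = j" by auto
      then have "vdim (orth U) = CARD('n) - j" using vdim_orth[OF U(1)] by arith
      then show "orth U \<in> ?A" using subsp_orth orth_antimono[OF U(2)] orth_orth[OF W] by simp
    qed
  qed
  then have "card ?A = card ?B" by (rule bij_betw_same_card)
  moreover have "vdim (orth W) = CARD('n) - vdim W" using vdim_orth[OF W] by simp
  ultimately show ?thesis using card_subspaces_of_dim[OF subsp_orth[of W], of j] by simp
qed

lemma sum_superspaces_by_codim:
  fixes W :: "('a::{finite,field}^'n) set"
  assumes W: "subsp W"
  shows "(\<Sum>V | subsp V \<and> W \<subseteq> V. f (vdim V))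
       = (\<Sum>j=0..CARD('n) - vdim W. qbinom CARD('a) (CARD('n) - vdim W) j * f (CARD('n) - j))"
proof -
  let ?n = "CARD('n)"
  have codim: "?n - vdim V = j \<longleftrightarrow> vdim V = ?n - j" if "j \<le> ?n" for V :: "('a^'n) set" and j
    using vdim_le_CARD[of V] that by linarith
  let ?S = "{V. subsp V \<and> W \<subseteq> V}"
  have "(\<Sum>V\<in>?S. f (vdim V)) = (\<Sum>j=0..?n - vdim W. \<Sum>V\<in>{V \<in> ?S. ?n - vdim V = j}. f (vdim V))"
    by (rule sum.group[symmetric]) (auto intro!: diff_le_mono2 vdim_mono)
  also have "\<dots> = (\<Sum>j=0..?n - vdim W. qbinom CARD('a) (?n - vdim W) j * f (?n - j))"
  proof (intro sum.cong refl)
    fix j assume "j \<in> {0..?n - vdim W}"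
    then have j: "j \<le> ?n" by simp
    have "(\<Sum>V\<in>{V \<in> ?S. ?n - vdim V = j}. f (vdim V))
        = (\<Sum>V | subsp V \<and> W \<subseteq> V \<and> vdim V = ?n - j. f (?n - j))"
      using codim[OF j] by (intro sum.cong) auto
    then show "(\<Sum>V\<in>{V \<in> ?S. ?n - vdim V = j}. f (vdim V))
        = qbinom CARD('a) (?n - vdim W) j * f (?n - j)"
      by (simp flip: card_superspaces_of_codim[OF W j])
  qed
  finally show ?thesis .
qed

text \<open>\<open>qmu q k\<close> is the Moebius value \<open>\<mu>(0, V)\<close> of the lattice of subspaces of a \<open>k\<close>-dimensional
  space \<open>V\<close> over \<open>\<bbbF>\<^sub>q\<close>.\<close>
definition qmu :: "nat \<Rightarrow> nat \<Rightarrow> real" where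
  "qmu q k = (-1) ^ k * real q ^ (k choose 2)"

lemma sum_qmu_subspaces:
  fixes V :: "('a::{finite,field}^'n) set"
  assumes V: "subsp V" "V \<noteq> {0}"
  shows "(\<Sum>U | subsp U \<and> U \<subseteq> V. qmu CARD('a) (vdim U)) = 0"
proof -
  have "(\<Sum>U | subsp U \<and> U \<subseteq> V. qmu CARD('a) (vdim U))
      = (\<Sum>k\<le>vdim V. qbinom CARD('a) (vdim V) k * qmu CARD('a) k)"
    by (rule sum_subspaces_by_dim[OF V(1)])
  also have "\<dots> = (\<Prod>i<vdim V. 1 - real CARD('a) ^ i)"
    using qbinomial_theorem[OF card_field_ge2[where 'a='a], of "vdim V" "-1"]
    by (simp add: qmu_def mult_ac)
  finally have "(\<Sum>U | subsp U \<and> U \<subseteq> V. qmu CARD('a) (vdim U)) = (\<Prod>i<vdim V. 1 - real CARD('a) ^ i)" .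
  moreover have "vdim V \<noteq> 0" using vdim_eq_0_iff[OF V(1)] V(2) by simp
  ultimately show ?thesis by (auto simp: prod_zero_iff intro!: bexI[of _ 0])
qed

text \<open>\<open>qmu_above q n l\<close> is the sum of \<open>qmu\<close> over the subspaces of \<open>\<bbbF>\<^sub>q\<^sup>n\<close> containing a fixed subspace of
  codimension \<open>l\<close>.\<close>
definition qmu_above :: "nat \<Rightarrow> nat \<Rightarrow> nat \<Rightarrow> real" where
  "qmu_above q n l = (\<Sum>j=0..l. qbinom q l j * qmu q (n - j))"

lemma sum_qmu_superspaces:
  fixes W :: "('a::{finite,field}^'n) set"
  assumes "subsp W"
  shows "(\<Sum>V | subsp V \<and> W \<subseteq> V. qmu CARD('a) (vdim V)) = qmu_above CARD('a) CARD('n) (CARD('n) - vdim W)"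
  unfolding qmu_above_def by (rule sum_superspaces_by_codim[OF assms])

lemma qmu_above_0 [simp]: "qmu_above q n 0 = qmu q n"
  by (simp add: qmu_above_def)

lemma qmu_above_full: "qmu_above CARD('a::{finite,field}) CARD('n::finite) CARD('n) = 0"
proof -
  have "{V :: ('a^'n) set. subsp V \<and> {0} \<subseteq> V} = {V. subsp V \<and> V \<subseteq> UNIV}" using subsp_0 by auto
  then show ?thesis
    using sum_qmu_superspaces[OF subsp_zero, where 'a='a and 'n='n]
      sum_qmu_subspaces[OF subsp_UNIV UNIV_neq_zero, where 'a='a and 'n='n] by simp
qed

section \<open>Moebius functions and chains of families of sets\<close>

lemma sum_Pow_neg_one_power:
  assumes "finite A"
  shows "(\<Sum>X\<in>Pow A. (-1) ^ card X) = (if A = {} then 1 else (0::'r::ring_1))"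
proof (cases "A = {}")
  case False
  have "card {X. X \<in> Pow A \<and> even (card X)} = card {X. X \<in> Pow A \<and> odd (card X)}"
    using card_subsupersets_even_odd[of A "{}"] assms False by auto
  then have "(\<Sum>X\<in>Pow A. (-1) ^ card X) = (0::'r)"
    using assms by (intro sum_alternating_cancels) simp_all
  then show ?thesis using False by simp
qed simp

lemma sum_avoiding_inclusion_exclusion:
  fixes \<C> :: "'b set set" and S :: "'b set set" and f :: "'b set \<Rightarrow> 'r::comm_ring_1"
  assumes "finite \<C>" "finite S"
  shows "(\<Sum>V | V \<in> S \<and> (\<forall>C\<in>\<C>. \<not> C \<subseteq> V). f V)
       = (\<Sum>X\<in>Pow \<C>. (-1) ^ card X * (\<Sum>V | V \<in> S \<and> \<Union>X \<subseteq> V. f V))"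
proof -
  have "(\<Sum>V | V \<in> S \<and> (\<forall>C\<in>\<C>. \<not> C \<subseteq> V). f V) = (\<Sum>V\<in>S. if \<forall>C\<in>\<C>. \<not> C \<subseteq> V then f V else 0)"
    using assms(2) by (simp add: sum.inter_filter[symmetric] conj_commute)
  also have "\<dots> = (\<Sum>V\<in>S. \<Sum>X | X \<in> Pow \<C> \<and> \<Union>X \<subseteq> V. (-1) ^ card X * f V)"
  proof (rule sum.cong[OF refl])
    fix V
    have "{X. X \<in> Pow \<C> \<and> \<Union>X \<subseteq> V} = Pow {C \<in> \<C>. C \<subseteq> V}" by auto
    then show "(if \<forall>C\<in>\<C>. \<not> C \<subseteq> V then f V else 0) = (\<Sum>X | X \<in> Pow \<C> \<and> \<Union>X \<subseteq> V. (-1) ^ card X * f V)"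
      using assms(1) by (simp add: sum_distrib_right[symmetric] sum_Pow_neg_one_power)
  qed
  also have "\<dots> = (\<Sum>X\<in>Pow \<C>. \<Sum>V | V \<in> S \<and> \<Union>X \<subseteq> V. (-1) ^ card X * f V)"
    using assms by (intro sum.swap_restrict) auto
  also have "\<dots> = (\<Sum>X\<in>Pow \<C>. (-1) ^ card X * (\<Sum>V | V \<in> S \<and> \<Union>X \<subseteq> V. f V))"
    by (simp add: sum_distrib_left)
  finally show ?thesis .
qed

declare mobius.simps [simp del]

lemma mobius_refl [simp]: "mobius P x x = 1"
  by (subst mobius.simps) simp

lemma mobius_psubset:
  "x \<subset> y \<Longrightarrow> mobius P x y = - (\<Sum>z | z \<in> P \<and> x \<subseteq> z \<and> z \<subset> y. mobius P x z)"
  by (subst mobius.simps) auto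

lemma mobius_left_sum:
  fixes P :: "'b::finite set set"
  assumes "y \<in> P" "x \<subseteq> y"
  shows "(\<Sum>w | w \<in> P \<and> x \<subseteq> w \<and> w \<subseteq> y. mobius P x w) = (if x = y then 1 else 0)"
proof (cases "x = y")
  case False
  then have "{w. w \<in> P \<and> x \<subseteq> w \<and> w \<subseteq> y} = insert y {z. z \<in> P \<and> x \<subseteq> z \<and> z \<subset> y}"
    using assms by auto
  then show ?thesis using False assms mobius_psubset[of x y P] by auto
next
  case True
  then have "{w. w \<in> P \<and> x \<subseteq> w \<and> w \<subseteq> y} = {x}" using assms by auto
  then show ?thesis using True by simp
qed

lemma mobius_unique:
  fixes P :: "'b::finite set set"
  assumes f: "\<And>z. z \<in> P \<Longrightarrow> x \<subseteq> z \<Longrightarrow> (\<Sum>w | w \<in> P \<and> x \<subseteq> w \<and> w \<subseteq> z. f w) = (if z = x then 1 else 0)"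
    and y: "y \<in> P" "x \<subseteq> y"
  shows "f y = mobius P x y"
  using y
proof (induction "card y" arbitrary: y rule: less_induct)
  case less
  show ?case
  proof (cases "y = x")
    case True
    then have "{w. w \<in> P \<and> x \<subseteq> w \<and> w \<subseteq> y} = {x}" using less.prems by auto
    then show ?thesis using f[OF less.prems] True by simp
  next
    case False
    then have xy: "x \<subset> y" using less.prems by auto
    have "{w. w \<in> P \<and> x \<subseteq> w \<and> w \<subseteq> y} = insert y {z. z \<in> P \<and> x \<subseteq> z \<and> z \<subset> y}"
      using less.prems by auto
    then have "f y = - (\<Sum>z | z \<in> P \<and> x \<subseteq> z \<and> z \<subset> y. f z)"
      using f[OF less.prems] False by simp
    also have "\<dots> = - (\<Sum>z | z \<in> P \<and> x \<subseteq> z \<and> z \<subset> y. mobius P x z)"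
    proof (intro arg_cong[where f = uminus] sum.cong refl)
      fix z assume "z \<in> {z. z \<in> P \<and> x \<subseteq> z \<and> z \<subset> y}"
      then show "f z = mobius P x z" using less.hyps psubset_card_mono[of y z] by simp
    qed
    finally show ?thesis using mobius_psubset[OF xy] by simp
  qed
qed

lemma mobius_convolution:
  fixes P :: "'b::finite set set"
  assumes "x \<in> P" "y \<in> P" "x \<subseteq> y"
  shows "(\<Sum>w | w \<in> P \<and> x \<subseteq> w \<and> w \<subseteq> y. mobius P x w * (\<Sum>z | z \<in> P \<and> w \<subseteq> z \<and> z \<subseteq> y. mobius P z y))
    = mobius P x y"
proof -
  let ?I = "\<lambda>a b. {z. z \<in> P \<and> a \<subseteq> z \<and> z \<subseteq> b}"
  have "(\<Sum>w\<in>?I x y. mobius P x w * (\<Sum>z\<in>?I w y. mobius P z y))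
      = (\<Sum>w\<in>?I x y. \<Sum>z\<in>{z \<in> ?I x y. w \<subseteq> z}. mobius P x w * mobius P z y)"
    unfolding sum_distrib_left by (intro sum.cong refl) auto
  also have "\<dots> = (\<Sum>z\<in>?I x y. (\<Sum>w\<in>?I x z. mobius P x w) * mobius P z y)"
    unfolding sum_distrib_right by (subst sum.swap_restrict) (auto intro!: sum.cong)
  also have "\<dots> = (\<Sum>z\<in>?I x y. if z = x then mobius P z y else 0)"
    by (intro sum.cong refl) (auto simp: mobius_left_sum)
  also have "\<dots> = mobius P x y"
    using assms by (simp add: sum.delta')
  finally show ?thesis .
qed

lemma mobius_right_sum:
  fixes P :: "'b::finite set set"
  assumes "x \<in> P" "y \<in> P" "x \<subseteq> y"
  shows "(\<Sum>z | z \<in> P \<and> x \<subseteq> z \<and> z \<subseteq> y. mobius P z y) = (if x = y then 1 else 0)"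
  using assms
proof (induction "card y - card x" arbitrary: x rule: less_induct)
  case less
  define A where "A w = (\<Sum>z | z \<in> P \<and> w \<subseteq> z \<and> z \<subseteq> y. mobius P z y)" for w
  show ?case
  proof (cases "x = y")
    case True
    then have "{z. z \<in> P \<and> x \<subseteq> z \<and> z \<subseteq> y} = {y}" using less.prems by auto
    then show ?thesis using True by simp
  next
    case False
    have A_above: "A w = (if w = y then 1 else 0)" if "w \<in> P" "x \<subset> w" "w \<subseteq> y" for w
      unfolding A_def using that less.prems
      by (intro less.hyps) (auto simp: diff_less_mono2 psubset_card_mono card_mono le_less_trans)
    have "{w. w \<in> P \<and> x \<subseteq> w \<and> w \<subseteq> y} = insert x (insert y {w. w \<in> P \<and> x \<subset> w \<and> w \<subset> y})"
      using less.prems False by auto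
    moreover have "(\<Sum>w | w \<in> P \<and> x \<subset> w \<and> w \<subset> y. mobius P x w * A w) = 0"
    proof (rule sum.neutral, rule ballI)
      fix w assume "w \<in> {w. w \<in> P \<and> x \<subset> w \<and> w \<subset> y}"
      then have w: "w \<in> P" "x \<subset> w" "w \<subseteq> y" "w \<noteq> y" by auto
      then have "A w = 0" using A_above[OF w(1-3)] by simp
      then show "mobius P x w * A w = 0" by simp
    qed
    ultimately have "(\<Sum>w | w \<in> P \<and> x \<subseteq> w \<and> w \<subseteq> y. mobius P x w * A w) = A x + mobius P x y"
      using False less.prems A_above by simp
    then show ?thesis
      using mobius_convolution[OF less.prems] False unfolding A_def by simp
  qed
qed

lemma sum_mobius_below_meet:
  fixes P :: "'b::finite set set"
  assumes meet_in: "meet \<in> P" and meet_iff: "\<And>w. w \<in> P \<Longrightarrow> w \<subseteq> meet \<longleftrightarrow> w \<subseteq> z \<and> w \<subseteq> h"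
    and x: "x \<in> P" "x \<subseteq> z" "x \<subseteq> h"
  shows "(\<Sum>w | w \<in> P \<and> x \<subseteq> w \<and> w \<subseteq> z \<and> w \<subseteq> h. mobius P x w) = (if meet = x then 1 else 0)"
proof -
  have "{w. w \<in> P \<and> x \<subseteq> w \<and> w \<subseteq> z \<and> w \<subseteq> h} = {w. w \<in> P \<and> x \<subseteq> w \<and> w \<subseteq> meet}"
    using meet_iff by blast
  moreover have "x \<subseteq> meet" using meet_iff[OF x(1)] x(2,3) by simp
  ultimately show ?thesis using mobius_left_sum[OF meet_in] by auto
qed

text \<open>Weisner's theorem, in the dual form: \<open>meet z\<close> plays the role of the meet of \<open>z\<close> with \<open>h\<close>.\<close>
lemma mobius_weisner:
  fixes P :: "'b::finite set set"
  assumes meet_in: "\<And>z. z \<in> P \<Longrightarrow> meet z \<in> P"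
    and meet_iff: "\<And>w z. w \<in> P \<Longrightarrow> z \<in> P \<Longrightarrow> w \<subseteq> meet z \<longleftrightarrow> w \<subseteq> z \<and> w \<subseteq> h"
    and x: "x \<in> P" "x \<subseteq> h" and y: "y \<in> P" "h \<subset> y"
  shows "(\<Sum>z | z \<in> P \<and> x \<subseteq> z \<and> z \<subseteq> y \<and> meet z = x. mobius P z y) = 0"
proof -
  let ?I = "\<lambda>a b. {z. z \<in> P \<and> a \<subseteq> z \<and> z \<subseteq> b}"
  have "(\<Sum>z | z \<in> P \<and> x \<subseteq> z \<and> z \<subseteq> y \<and> meet z = x. mobius P z y)
      = (\<Sum>z\<in>{z \<in> ?I x y. meet z = x}. mobius P z y)"
    by (rule sum.cong) auto
  also have "\<dots> = (\<Sum>z\<in>?I x y. if meet z = x then mobius P z y else 0)"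
    by (rule sum.inter_filter) simp
  also have "\<dots> = (\<Sum>z\<in>?I x y. (if meet z = x then 1 else 0) * mobius P z y)"
    by (rule sum.cong) simp_all
  also have "\<dots> = (\<Sum>z\<in>?I x y. \<Sum>w\<in>{w \<in> ?I x y. w \<subseteq> z \<and> w \<subseteq> h}. mobius P x w * mobius P z y)"
  proof (rule sum.cong[OF refl])
    fix z assume z: "z \<in> ?I x y"
    then have "(\<Sum>w | w \<in> P \<and> x \<subseteq> w \<and> w \<subseteq> z \<and> w \<subseteq> h. mobius P x w) = (if meet z = x then 1 else 0)"
      using x by (intro sum_mobius_below_meet[OF meet_in meet_iff]) auto
    moreover have "{w \<in> ?I x y. w \<subseteq> z \<and> w \<subseteq> h} = {w. w \<in> P \<and> x \<subseteq> w \<and> w \<subseteq> z \<and> w \<subseteq> h}"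
      using z by auto
    ultimately show "(if meet z = x then 1 else 0) * mobius P z y
        = (\<Sum>w\<in>{w \<in> ?I x y. w \<subseteq> z \<and> w \<subseteq> h}. mobius P x w * mobius P z y)"
      by (simp add: sum_distrib_right[symmetric])
  qed
  also have "\<dots> = (\<Sum>w\<in>?I x y. \<Sum>z\<in>{z \<in> ?I x y. w \<subseteq> z \<and> w \<subseteq> h}. mobius P x w * mobius P z y)"
    by (rule sum.swap_restrict) simp_all
  also have "\<dots> = 0"
  proof (rule sum.neutral, rule ballI)
    fix w assume w: "w \<in> ?I x y"
    show "(\<Sum>z\<in>{z \<in> ?I x y. w \<subseteq> z \<and> w \<subseteq> h}. mobius P x w * mobius P z y) = 0"
    proof (cases "w \<subseteq> h")
      case True
      then have "{z \<in> ?I x y. w \<subseteq> z \<and> w \<subseteq> h} = ?I w y" using w by auto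
      moreover have "w \<noteq> y" using True y(2) by blast
      ultimately show ?thesis using mobius_right_sum[of w P y] w y(1) by (simp add: sum_distrib_left[symmetric])
    qed simp
  qed
  finally show ?thesis .
qed

lemma Union_in_chains: "C \<in> chains (F :: 'b::finite set set) \<Longrightarrow> C \<noteq> {} \<Longrightarrow> \<Union>C \<in> C"
  by (intro Union_in_chain) (auto simp: chains_alt_def)

lemma chains_with_top:
  fixes F :: "'b::finite set set"
  assumes V: "V \<in> F"
  shows "{C \<in> chains F - {{}}. \<Union>C = V} = insert V ` chains {U\<in>F. U \<subset> V}"
proof (intro equalityI subsetI)
  fix C assume C: "C \<in> {C \<in> chains F - {{}}. \<Union>C = V}"
  then have "V \<in> C" using Union_in_chains by blast
  moreover have "C - {V} \<in> chains {U\<in>F. U \<subset> V}"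
    using C unfolding chains_def chain_subset_def by blast
  ultimately show "C \<in> insert V ` chains {U\<in>F. U \<subset> V}"
    by (intro image_eqI[of _ _ "C - {V}"]) auto
next
  fix C assume "C \<in> insert V ` chains {U\<in>F. U \<subset> V}"
  then obtain D where D: "D \<in> chains {U\<in>F. U \<subset> V}" "C = insert V D" by blast
  then have "C \<in> chains F" using V unfolding chains_def chain_subset_def by blast
  moreover have "\<Union>C = V" using D unfolding chains_def by blast
  ultimately show "C \<in> {C \<in> chains F - {{}}. \<Union>C = V}" using D by blast
qed

lemma sum_chains_by_top:
  fixes F :: "'b::finite set set"
  shows "(\<Sum>C\<in>chains F. f C) = f {} + (\<Sum>V\<in>F. \<Sum>D\<in>chains {U\<in>F. U \<subset> V}. f (insert V D))"
proof -
  have "{} \<in> chains F" by (simp add: chains_def chain_subset_def)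
  then have "(\<Sum>C\<in>chains F. f C) = f {} + (\<Sum>C\<in>chains F - {{}}. f C)"
    by (simp add: sum.remove)
  also have "(\<Sum>C\<in>chains F - {{}}. f C) = (\<Sum>V\<in>F. \<Sum>C\<in>{C \<in> chains F - {{}}. \<Union>C = V}. f C)"
  proof (rule sum.group[symmetric])
    show "Union ` (chains F - {{}}) \<subseteq> F"
      using Union_in_chains chainsD2 by blast
  qed simp_all
  also have "\<dots> = (\<Sum>V\<in>F. \<Sum>D\<in>chains {U\<in>F. U \<subset> V}. f (insert V D))"
  proof (rule sum.cong[OF refl])
    fix V assume V: "V \<in> F"
    have "inj_on (insert V) (chains {U\<in>F. U \<subset> V})"
    proof (rule inj_onI)
      fix D D' assume "D \<in> chains {U\<in>F. U \<subset> V}" "D' \<in> chains {U\<in>F. U \<subset> V}" "insert V D = insert V D'"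
      moreover from this have "V \<notin> D" "V \<notin> D'" unfolding chains_def by blast+
      ultimately show "D = D'" by (metis Diff_insert_absorb)
    qed
    then show "(\<Sum>C\<in>{C \<in> chains F - {{}}. \<Union>C = V}. f C) = (\<Sum>D\<in>chains {U\<in>F. U \<subset> V}. f (insert V D))"
      unfolding chains_with_top[OF V] by (simp add: sum.reindex)
  qed
  finally show ?thesis .
qed

lemma sum_chains_neg_one_power:
  fixes F :: "'b::finite set set"
  shows "(\<Sum>C\<in>chains F. (-1) ^ card C) = 1 - (\<Sum>V\<in>F. \<Sum>D\<in>chains {U\<in>F. U \<subset> V}. (-1) ^ card D :: 'r::ring_1)"
proof -
  have "(\<Sum>D\<in>chains {U\<in>F. U \<subset> V}. (-1) ^ card (insert V D)) = - (\<Sum>D\<in>chains {U\<in>F. U \<subset> V}. (-1) ^ card D :: 'r)"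
    for V
  proof -
    have "V \<notin> D" if "D \<in> chains {U\<in>F. U \<subset> V}" for D
      using that unfolding chains_def by blast
    then show ?thesis by (simp add: sum_negf[symmetric])
  qed
  then show ?thesis unfolding sum_chains_by_top[of _ F] by (simp add: sum_negf)
qed

lemma sum_chains_proper_nonzero_subspaces:
  fixes V :: "('a::{finite,field}^'n) set"
  assumes "subsp V" "V \<noteq> {0}"
  shows "(\<Sum>D\<in>chains {U. subsp U \<and> U \<noteq> {0} \<and> U \<subset> V}. (-1) ^ card D) = - qmu CARD('a) (vdim V)"
  using assms
proof (induction "vdim V" arbitrary: V rule: less_induct)
  case less
  let ?F = "\<lambda>V. {U :: ('a^'n) set. subsp U \<and> U \<noteq> {0} \<and> U \<subset> V}"
  have "{U. subsp U \<and> U \<subseteq> V} = insert {0} (insert V (?F V))"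
    using less.prems subsp_0 subsp_zero by auto
  then have sum_F: "(\<Sum>U\<in>?F V. qmu CARD('a) (vdim U)) = - 1 - qmu CARD('a) (vdim V)"
    using sum_qmu_subspaces[OF less.prems] less.prems(2) by (simp add: qmu_def binomial_eq_0; linarith)
  have sub: "{U' \<in> ?F V. U' \<subset> U} = ?F U" if "U \<in> ?F V" for U
    using that by auto
  have "(\<Sum>D\<in>chains (?F V). (-1) ^ card D)
      = 1 - (\<Sum>U\<in>?F V. \<Sum>D\<in>chains {U' \<in> ?F V. U' \<subset> U}. (-1) ^ card D :: real)"
    by (rule sum_chains_neg_one_power)
  also have "(\<Sum>U\<in>?F V. \<Sum>D\<in>chains {U' \<in> ?F V. U' \<subset> U}. (-1) ^ card D)
      = (\<Sum>U\<in>?F V. \<Sum>D\<in>chains (?F U). (-1) ^ card D)"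
    by (rule sum.cong[OF refl]) (simp only: sub)
  also have "\<dots> = - (\<Sum>U\<in>?F V. qmu CARD('a) (vdim U))"
    using less.hyps vdim_psubset[OF _ less.prems(1)] by (simp add: sum_negf[symmetric])
  finally show ?case using sum_F by simp
qed

lemma neg_one_powi_int_minus_one: "(-1::real) powi (int r - 1) = - ((-1) ^ r)"
proof (cases r)
  case (Suc r')
  then have "int r - 1 = int r'" by simp
  then show ?thesis using Suc by simp
qed (simp add: power_int_minus)

section \<open>\<open>q\<close>-matroids\<close>

locale q_matroid =
  fixes rho :: "('a::{finite,field}^'n::finite) set \<Rightarrow> nat"
  assumes qmatroid: "qmatroid rho"
begin

lemma rank_le_dim: "subsp X \<Longrightarrow> rho X \<le> vdim X"
  using qmatroid unfolding qmatroid_def by blast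

lemma rank_mono: "subsp X \<Longrightarrow> subsp Y \<Longrightarrow> X \<subseteq> Y \<Longrightarrow> rho X \<le> rho Y"
  using qmatroid unfolding qmatroid_def by blast

lemma rank_submod: "subsp X \<Longrightarrow> subsp Y \<Longrightarrow> rho (vsum X Y) + rho (X \<inter> Y) \<le> rho X + rho Y"
  using qmatroid unfolding qmatroid_def by blast

lemma rank_zero [simp]: "rho {0} = 0"
  using rank_le_dim[OF subsp_zero] by simp

lemma rank_Suc_dim_le:
  assumes X: "subsp X" and Y: "subsp Y" and XY: "X \<subseteq> Y" and d: "vdim Y = Suc (vdim X)"
  shows "rho Y \<le> Suc (rho X)"
proof -
  have "X \<noteq> Y" using d by auto
  then obtain y where y: "y \<in> Y" "y \<notin> X" using XY by blast
  let ?l = "vec.span {y}"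
  have "vsum X ?l = Y"
  proof (rule subsp_dim_equal[OF vsum_subsp[OF X subsp_span] Y])
    show "vsum X ?l \<subseteq> Y" using X Y XY y by (intro vsum_least subsp_span span_subset_subsp) auto
    have "y \<in> ?l" by (simp add: vec.span_base)
    then have "X \<subset> vsum X ?l"
      using vsum_upper1[OF subsp_span[of "{y}"], of X] vsum_upper2[OF X, of ?l] y by blast
    then show "vdim Y \<le> vdim (vsum X ?l)"
      using vdim_psubset[OF X vsum_subsp[OF X subsp_span[of "{y}"]]] d by simp
  qed
  moreover have "vdim ?l \<le> 1" by (simp add: vdim_vec)
  then have "rho ?l \<le> 1" using rank_le_dim[OF subsp_span, of "{y}"] by linarith
  ultimately show ?thesis using rank_submod[OF X subsp_span, of "{y}"] by simp
qed

lemma rank_le_rank_add_dim_diff: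
  assumes X: "subsp X" and Y: "subsp Y" and XY: "X \<subseteq> Y"
  shows "rho Y \<le> rho X + (vdim Y - vdim X)"
  using Y XY
proof (induction "vdim Y - vdim X" arbitrary: Y)
  case 0
  then show ?case using subsp_dim_equal[OF X] by fastforce
next
  case (Suc k)
  have "vdim X \<le> vdim Y - 1" using Suc.hyps(2) by simp
  then obtain Z where Z: "subsp Z" "X \<subseteq> Z" "Z \<subseteq> Y" "vdim Z = vdim Y - 1"
    using exists_intermediate_subsp[OF X Suc.prems] by force
  moreover have "k = vdim Z - vdim X" using Z(4) Suc.hyps(2) by simp
  ultimately have "rho Z \<le> rho X + (vdim Z - vdim X)" using Suc.hyps(1) by blast
  moreover have "vdim Y = Suc (vdim Z)" using Z(4) Suc.hyps(2) by simp
  then have "rho Y \<le> Suc (rho Z)" using rank_Suc_dim_le[OF Z(1) Suc.prems(1) Z(3)] by simp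
  ultimately show ?case using \<open>vdim Y = Suc (vdim Z)\<close> vdim_mono[OF Z(2)] by linarith
qed

lemma nullity_mono: "subsp X \<Longrightarrow> subsp Y \<Longrightarrow> X \<subseteq> Y \<Longrightarrow> nullity rho X \<le> nullity rho Y"
  using rank_le_rank_add_dim_diff[of X Y] rank_le_dim[of X] rank_le_dim[of Y] vdim_mono[of X Y]
  unfolding nullity_def by linarith

lemma nullity_supermod:
  assumes X: "subsp X" and Y: "subsp Y"
  shows "nullity rho X + nullity rho Y \<le> nullity rho (vsum X Y) + nullity rho (X \<inter> Y)"
  using rank_submod[OF X Y] vdim_vsum_Int[OF X Y] rank_le_dim[OF X] rank_le_dim[OF Y]
    rank_le_dim[OF vsum_subsp[OF X Y]] rank_le_dim[OF subsp_Int[OF X Y]]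
  unfolding nullity_def by linarith

lemma exists_subsp_with_nullity:
  assumes X: "subsp X" and Y: "subsp Y" and XY: "X \<subseteq> Y"
    and i: "nullity rho X \<le> i" "i \<le> nullity rho Y"
  shows "\<exists>Z. subsp Z \<and> X \<subseteq> Z \<and> Z \<subseteq> Y \<and> nullity rho Z = i"
  using Y XY i(2)
proof (induction "vdim Y - vdim X" arbitrary: Y)
  case 0
  then have "X = Y" using subsp_dim_equal[OF X] by fastforce
  then have "nullity rho Y \<le> i" using i(1) by simp
  then have "nullity rho Y = i" using 0 by linarith
  then show ?case using 0 by blast
next
  case (Suc k)
  show ?case
  proof (cases "nullity rho Y = i")
    case False
    have "vdim X \<le> vdim Y - 1" using Suc.hyps(2) by simp
    then obtain Z where Z: "subsp Z" "X \<subseteq> Z" "Z \<subseteq> Y" "vdim Z = vdim Y - 1"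
      using exists_intermediate_subsp[OF X Suc.prems(1,2)] by force
    have "nullity rho Y \<le> Suc (nullity rho Z)"
      using rank_mono[OF Z(1) Suc.prems(1) Z(3)] rank_le_dim[OF Z(1)] rank_le_dim[OF Suc.prems(1)]
        Z(4) Suc.hyps(2) unfolding nullity_def by linarith
    moreover have "k = vdim Z - vdim X" using Z(4) Suc.hyps(2) by simp
    ultimately obtain Z' where "subsp Z'" "X \<subseteq> Z'" "Z' \<subseteq> Z" "nullity rho Z' = i"
      using Suc.hyps(1) Z(1,2) False Suc.prems(3) by force
    then show ?thesis using Z(3) by blast
  next
    case True
    then show ?thesis using Suc.prems(1,2) by blast
  qed
qed

lemma qcircuitsD: "C \<in> qcircuits rho \<Longrightarrow> subsp C \<and> nullity rho C = 1"
  unfolding qcircuits_def qcycle_of_def by blast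

lemma qcircuit_nonzero: "C \<in> qcircuits rho \<Longrightarrow> C \<noteq> {0}"
  using qcircuitsD[of C] by (auto simp: nullity_def)

lemma nullity_psubset_qcircuit:
  assumes C: "C \<in> qcircuits rho" and Y: "subsp Y" "Y \<subset> C"
  shows "nullity rho Y = 0"
proof -
  have "nullity rho Y \<le> 1" using nullity_mono[OF Y(1), of C] qcircuitsD[OF C] Y(2) by auto
  moreover have "nullity rho Y \<noteq> 1" using C Y unfolding qcircuits_def qcycle_of_def by blast
  ultimately show ?thesis by simp
qed

lemma exists_qcycle_below:
  assumes X: "subsp X"
  shows "\<exists>C \<subseteq> X. qcycle_of rho (nullity rho X) C"
proof -
  let ?P = "\<lambda>Y. subsp Y \<and> nullity rho Y = nullity rho X \<and> Y \<subseteq> X"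
  obtain C where C: "?P C" and min: "\<And>Y. ?P Y \<Longrightarrow> vdim C \<le> vdim Y"
    using ex_has_least_nat[of ?P X vdim] X by blast
  have "Y = C" if "subsp Y" "nullity rho Y = nullity rho X" "Y \<subseteq> C" for Y
    using min[of Y] that C vdim_psubset[of Y C] by fastforce
  then show ?thesis using C unfolding qcycle_of_def by blast
qed

lemma exists_qcircuit_below:
  assumes V: "subsp V" and n: "0 < nullity rho V"
  shows "\<exists>C\<in>qcircuits rho. C \<subseteq> V"
proof -
  have "nullity rho {0} = 0" by (simp add: nullity_def)
  then obtain Z where Z: "subsp Z" "Z \<subseteq> V" "nullity rho Z = 1"
    using exists_subsp_with_nullity[OF subsp_zero V _ _, of 1] subsp_0[OF V] n by auto
  then obtain C where "C \<subseteq> Z" "qcycle_of rho 1 C" using exists_qcycle_below[OF Z(1)] by auto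
  then show ?thesis using Z unfolding qcircuits_def by blast
qed

lemma indep_iff_nullity_eq_0: "indep rho V \<longleftrightarrow> subsp V \<and> nullity rho V = 0"
  unfolding indep_def nullity_def using rank_le_dim by force

lemma indep_iff_no_qcircuit:
  assumes V: "subsp V"
  shows "indep rho V \<longleftrightarrow> (\<nexists>C. C \<in> qcircuits rho \<and> C \<subseteq> V)"
proof
  assume "indep rho V"
  then show "\<nexists>C. C \<in> qcircuits rho \<and> C \<subseteq> V"
    using nullity_mono[OF _ V] qcircuitsD unfolding indep_iff_nullity_eq_0 by fastforce
next
  assume "\<nexists>C. C \<in> qcircuits rho \<and> C \<subseteq> V"
  then show "indep rho V" using exists_qcircuit_below[OF V] V unfolding indep_iff_nullity_eq_0 by blast
qed

lemma nullity_vsum_qcircuit: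
  assumes C: "C \<in> qcircuits rho" and H: "subsp H" and "\<not> C \<subseteq> H"
  shows "nullity rho H < nullity rho (vsum H C)"
proof -
  have "H \<inter> C \<subset> C" using assms(3) by blast
  then have "nullity rho (H \<inter> C) = 0"
    using nullity_psubset_qcircuit[OF C subsp_Int[OF H]] qcircuitsD[OF C] by blast
  then show ?thesis using nullity_supermod[OF H] qcircuitsD[OF C] by fastforce
qed

lemma qcycle_of_span_qcircuits:
  assumes X: "X \<subseteq> qcircuits rho"
  shows "qcycle_of rho (nullity rho (vspan (\<Union>X))) (vspan (\<Union>X))"
proof -
  let ?Y = "vspan (\<Union>X)"
  have "?Y \<subseteq> Y'" if Y': "subsp Y'" "nullity rho Y' = nullity rho ?Y" "Y' \<subseteq> ?Y" for Y'
  proof (rule vspan_Union_subset[OF Y'(1)], rule ccontr)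
    fix C assume C: "C \<in> X" "\<not> C \<subseteq> Y'"
    have Cc: "subsp C" using C X qcircuitsD by blast
    have "vsum Y' C \<subseteq> ?Y" using vsum_least[OF Y'(1) Cc subsp_vspan Y'(3)] subset_vspan_Union[OF C(1)] .
    then have "nullity rho (vsum Y' C) \<le> nullity rho ?Y"
      using nullity_mono[OF vsum_subsp[OF Y'(1) Cc] subsp_vspan] by blast
    then show False using nullity_vsum_qcircuit[OF _ Y'(1) C(2)] C X Y'(2) by auto
  qed
  then show ?thesis unfolding qcycle_of_def using subsp_vspan by blast
qed

lemma span_qcircuits_in_qcycles: "X \<subseteq> qcircuits rho \<Longrightarrow> vspan (\<Union>X) \<in> qcycles rho"
  using qcycle_of_span_qcircuits unfolding qcycles_def by blast

text \<open>A largest subspace between \<open>B\<close> and \<open>H\<close> of rank \<open>rho B\<close> absorbs every such extension of \<open>B\<close>, by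
  submodularity.\<close>
lemma rank_eq_if_rank_span_insert_eq:
  assumes B: "subsp B" "B \<subseteq> H" and H: "subsp H"
    and rank_insert: "\<And>v. v \<in> H \<Longrightarrow> v \<notin> B \<Longrightarrow> rho (vec.span (insert v B)) = rho B"
  shows "rho H = rho B"
proof -
  have "subsp B \<and> B \<subseteq> B \<and> B \<subseteq> H \<and> rho B = rho B" using B by simp
  then obtain Z where Z: "subsp Z" "B \<subseteq> Z" "Z \<subseteq> H" "rho Z = rho B"
    and Z_max: "\<And>Z'. subsp Z' \<Longrightarrow> B \<subseteq> Z' \<Longrightarrow> Z' \<subseteq> H \<Longrightarrow> rho Z' = rho B \<Longrightarrow> vdim Z' \<le> vdim Z"
    using ex_has_greatest_nat[of "\<lambda>Z. subsp Z \<and> B \<subseteq> Z \<and> Z \<subseteq> H \<and> rho Z = rho B" _ vdim "Suc CARD('n)"]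
      vdim_le_CARD by (metis le_imp_less_Suc)
  have "Z = H"
  proof (rule ccontr)
    assume "Z \<noteq> H"
    then obtain v where v: "v \<in> H" "v \<notin> Z" using Z(3) by blast
    let ?Bv = "vec.span (insert v B)"
    have Bv: "subsp ?Bv" "B \<subseteq> ?Bv" "v \<in> ?Bv" "?Bv \<subseteq> H"
      using subsp_span[of "insert v B"] vec.span_superset[of "insert v B"]
        span_subset_subsp[OF H, of "insert v B"] v(1) B(2) by auto
    let ?S = "vsum Z ?Bv"
    have S: "subsp ?S" "B \<subseteq> ?S" "?S \<subseteq> H" "Z \<subset> ?S"
      using vsum_subsp[OF Z(1) Bv(1)] vsum_upper1[OF Bv(1), of Z] vsum_upper2[OF Z(1), of ?Bv]
        vsum_least[OF Z(1) Bv(1) H Z(3) Bv(4)] Z(2) Bv(3) v(2) by auto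
    have "rho B \<le> rho (Z \<inter> ?Bv)" using rank_mono[OF B(1) subsp_Int[OF Z(1) Bv(1)]] Z(2) Bv(2) by blast
    moreover have "rho ?Bv = rho B" using rank_insert[OF v(1)] v(2) Z(2) by blast
    ultimately have "rho ?S \<le> rho B" using rank_submod[OF Z(1) Bv(1)] Z(4) by linarith
    then have "rho ?S = rho B" using rank_mono[OF B(1) S(1,2)] by simp
    then have "vdim ?S \<le> vdim Z" using Z_max S by blast
    then show False using vdim_psubset[OF Z(1) S(1) S(4)] by simp
  qed
  then show ?thesis using Z(4) by simp
qed

lemma exists_indep_full_rank:
  assumes H: "subsp H"
  shows "\<exists>B. indep rho B \<and> B \<subseteq> H \<and> rho B = rho H"
proof -
  have "indep rho {0} \<and> {0} \<subseteq> H" using subsp_0[OF H] by (simp add: indep_def subsp_zero)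
  then obtain B where B: "indep rho B" "B \<subseteq> H"
    and B_max: "\<And>B'. indep rho B' \<Longrightarrow> B' \<subseteq> H \<Longrightarrow> vdim B' \<le> vdim B"
    using ex_has_greatest_nat[of "\<lambda>B. indep rho B \<and> B \<subseteq> H" _ vdim "Suc CARD('n)"]
      vdim_le_CARD by (metis le_imp_less_Suc)
  have Bs: "subsp B" and rB: "rho B = vdim B" using B(1) unfolding indep_def by auto
  have "rho (vec.span (insert v B)) = rho B" if v: "v \<in> H" "v \<notin> B" for v
  proof -
    let ?Bv = "vec.span (insert v B)"
    have d: "vdim ?Bv = Suc (vdim B)" by (rule vdim_span_insert[OF Bs v(2)])
    have sub: "B \<subseteq> ?Bv" using vec.span_superset by blast
    have "\<not> indep rho ?Bv"
      using B_max[of ?Bv] d span_subset_subsp[OF H] v(1) B(2) by auto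
    then have "rho ?Bv \<noteq> Suc (rho B)" using d rB subsp_span by (auto simp: indep_def)
    then show ?thesis using rank_mono[OF Bs subsp_span sub] rank_Suc_dim_le[OF Bs subsp_span sub d] by simp
  qed
  then have "rho H = rho B" using rank_eq_if_rank_span_insert_eq[OF Bs B(2) H] by blast
  then show ?thesis using B by auto
qed

lemma exists_qcircuit_not_in_hyperplane:
  assumes H: "subsp H" and W: "subsp W" and HW: "H \<subseteq> W" and d: "vdim W = Suc (vdim H)"
    and r: "rho H = rho W"
  shows "\<exists>C\<in>qcircuits rho. C \<subseteq> W \<and> \<not> C \<subseteq> H"
proof -
  obtain B where B: "indep rho B" "B \<subseteq> H" "rho B = rho H" using exists_indep_full_rank[OF H] by blast
  have Bs: "subsp B" and rB: "rho B = vdim B" using B(1) unfolding indep_def by auto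
  have "H \<noteq> W" using d by auto
  then obtain y where y: "y \<in> W" "y \<notin> H" using HW by blast
  let ?Bv = "vec.span (insert y B)"
  have Bv: "subsp ?Bv" "vdim ?Bv = Suc (vdim B)" "?Bv \<subseteq> W" "B \<subseteq> ?Bv"
    using subsp_span[of "insert y B"] vdim_span_insert[OF Bs, of y] y B(2) HW
      span_subset_subsp[OF W, of "insert y B"] vec.span_superset[of "insert y B"] by auto
  have "rho ?Bv \<le> rho W" by (rule rank_mono[OF Bv(1) W Bv(3)])
  then have "0 < nullity rho ?Bv" using Bv(2) rB B(3) r unfolding nullity_def by simp
  then obtain C where C: "C \<in> qcircuits rho" "C \<subseteq> ?Bv" using exists_qcircuit_below[OF Bv(1)] by blast
  have "?Bv \<inter> H = B"
  proof (rule subsp_dim_equal[OF Bs subsp_Int[OF Bv(1) H], symmetric])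
    show "B \<subseteq> ?Bv \<inter> H" using Bv(4) B(2) by blast
    have "?Bv \<inter> H \<subset> ?Bv" using y vec.span_base[of y "insert y B"] by blast
    then show "vdim (?Bv \<inter> H) \<le> vdim B"
      using vdim_psubset[OF subsp_Int[OF Bv(1) H] Bv(1)] Bv(2) by simp
  qed
  then have "\<not> C \<subseteq> H" using C indep_iff_no_qcircuit[OF Bs] B(1) by blast
  then show ?thesis using C Bv(3) by blast
qed

section \<open>The lattice of cycles\<close>

definition cyclic_part :: "('a^'n) set \<Rightarrow> ('a^'n) set" where
  "cyclic_part W = vspan (\<Union>{C \<in> qcircuits rho. C \<subseteq> W})"

lemma subsp_cyclic_part: "subsp (cyclic_part W)"
  unfolding cyclic_part_def by (rule subsp_vspan)

lemma cyclic_part_subset: "subsp W \<Longrightarrow> cyclic_part W \<subseteq> W"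
  unfolding cyclic_part_def by (rule vspan_Union_subset) auto

lemma qcircuit_subset_cyclic_part: "C \<in> qcircuits rho \<Longrightarrow> C \<subseteq> W \<Longrightarrow> C \<subseteq> cyclic_part W"
  unfolding cyclic_part_def by (rule subset_vspan_Union) auto

lemma cyclic_part_mono: "W \<subseteq> W' \<Longrightarrow> cyclic_part W \<subseteq> cyclic_part W'"
  unfolding cyclic_part_def by (rule vspan_Union_subset[OF subsp_vspan]) (rule subset_vspan_Union, blast)

lemma cyclic_part_in_qcycles: "cyclic_part W \<in> qcycles rho"
  unfolding cyclic_part_def by (rule span_qcircuits_in_qcycles) auto

text \<open>Removing a hyperplane that contains all circuits of \<open>W\<close> drops the rank, so the nullity is carried
  by the circuits.\<close>
lemma nullity_cyclic_part:
  assumes "subsp W"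
  shows "nullity rho (cyclic_part W) = nullity rho W"
  using assms
proof (induction "vdim W" arbitrary: W rule: less_induct)
  case less
  show ?case
  proof (cases "cyclic_part W = W")
    case False
    then have "vdim (cyclic_part W) < vdim W"
      using vdim_psubset[OF subsp_cyclic_part less.prems] cyclic_part_subset[OF less.prems] by blast
    then obtain H where H: "subsp H" "cyclic_part W \<subseteq> H" "H \<subseteq> W" "vdim W = Suc (vdim H)"
      using exists_intermediate_subsp[OF subsp_cyclic_part less.prems cyclic_part_subset[OF less.prems],
          of "vdim W - 1"] by force
    have circuits_in_H: "C \<subseteq> H" if "C \<in> qcircuits rho" "C \<subseteq> W" for C
      using qcircuit_subset_cyclic_part[OF that] H(2) by blast
    then have "rho H \<noteq> rho W" using exists_qcircuit_not_in_hyperplane[OF H(1) less.prems H(3,4)] by blast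
    then have "nullity rho H = nullity rho W"
      using rank_mono[OF H(1) less.prems H(3)] rank_Suc_dim_le[OF H(1) less.prems H(3,4)] H(4)
        rank_le_dim[OF H(1)] rank_le_dim[OF less.prems] unfolding nullity_def by linarith
    moreover have "{C \<in> qcircuits rho. C \<subseteq> H} = {C \<in> qcircuits rho. C \<subseteq> W}"
      using circuits_in_H H(3) by blast
    then have "cyclic_part H = cyclic_part W" unfolding cyclic_part_def by simp
    ultimately show ?thesis using less.hyps[OF _ H(1)] H(4) by simp
  qed simp
qed

lemma qcycles_subsp: "y \<in> qcycles rho \<Longrightarrow> subsp y"
  unfolding qcycles_def qcycle_of_def by blast

lemma cyclic_part_qcycle:
  assumes "y \<in> qcycles rho"
  shows "cyclic_part y = y"
proof -
  obtain i where "qcycle_of rho i y" using assms unfolding qcycles_def by blast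
  then have y: "subsp y" "nullity rho y = i"
    and y_min: "\<And>Y. subsp Y \<Longrightarrow> nullity rho Y = i \<Longrightarrow> Y \<subseteq> y \<Longrightarrow> Y = y"
    unfolding qcycle_of_def by auto
  show ?thesis
    by (rule y_min) (simp_all add: subsp_cyclic_part nullity_cyclic_part cyclic_part_subset y)
qed

lemma nullity_strict_mono_qcycles:
  assumes x: "x \<in> qcycles rho" and y: "y \<in> qcycles rho" and xy: "x \<subset> y"
  shows "nullity rho x < nullity rho y"
proof -
  have "nullity rho x \<le> nullity rho y" using nullity_mono[OF qcycles_subsp[OF x] qcycles_subsp[OF y]] xy by blast
  moreover have "nullity rho x \<noteq> nullity rho y"
    using y x xy unfolding qcycles_def qcycle_of_def by blast
  ultimately show ?thesis by simp
qed

lemma zero_in_qcycles: "{0} \<in> qcycles rho"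
proof -
  have "qcycle_of rho 0 {0}"
    unfolding qcycle_of_def using subsp_zero subsp_0 by (auto simp: nullity_def)
  then show ?thesis unfolding qcycles_def by blast
qed

lemma exists_qcircuit_below_qcycle:
  assumes y: "y \<in> qcycles rho" and ne: "y \<noteq> {0}"
  shows "\<exists>C\<in>qcircuits rho. C \<subseteq> y"
proof -
  have "{0} \<subset> y" using subsp_0[OF qcycles_subsp[OF y]] ne by blast
  then have "nullity rho {0} < nullity rho y" by (rule nullity_strict_mono_qcycles[OF zero_in_qcycles y])
  then show ?thesis using exists_qcircuit_below[OF qcycles_subsp[OF y]] by simp
qed

lemma subset_cyclic_part_Int_iff:
  assumes w: "w \<in> qcycles rho" and z: "subsp z" and h: "subsp h"
  shows "w \<subseteq> cyclic_part (z \<inter> h) \<longleftrightarrow> w \<subseteq> z \<and> w \<subseteq> h"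
proof
  assume "w \<subseteq> cyclic_part (z \<inter> h)"
  then show "w \<subseteq> z \<and> w \<subseteq> h" using cyclic_part_subset[OF subsp_Int[OF z h]] by blast
next
  assume "w \<subseteq> z \<and> w \<subseteq> h"
  then have "cyclic_part w \<subseteq> cyclic_part (z \<inter> h)" by (intro cyclic_part_mono) blast
  then show "w \<subseteq> cyclic_part (z \<inter> h)" using cyclic_part_qcycle[OF w] by simp
qed

definition crosscut_sum :: "('a^'n) set \<Rightarrow> int" where
  "crosscut_sum y = (\<Sum>X | X \<subseteq> qcircuits rho \<and> vspan (\<Union>X) = y. (-1) ^ card X)"

lemma no_qcircuit_below_iff:
  assumes "y \<in> qcycles rho"
  shows "{C \<in> qcircuits rho. C \<subseteq> y} = {} \<longleftrightarrow> y = {0}"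
proof
  show "{C \<in> qcircuits rho. C \<subseteq> y} = {} \<Longrightarrow> y = {0}"
    using exists_qcircuit_below_qcycle[OF assms] by blast
  have "C = {0}" if "C \<in> qcircuits rho" "C \<subseteq> {0}" for C
    using that subsp_0 qcircuitsD by blast
  then show "y = {0} \<Longrightarrow> {C \<in> qcircuits rho. C \<subseteq> y} = {}"
    using qcircuit_nonzero by blast
qed

lemma sum_crosscut_sum_below:
  assumes y: "y \<in> qcycles rho"
  shows "(\<Sum>z | z \<in> qcycles rho \<and> {0} \<subseteq> z \<and> z \<subseteq> y. crosscut_sum z) = (if y = {0} then 1 else 0)"
proof -
  let ?Z = "{z. z \<in> qcycles rho \<and> {0} \<subseteq> z \<and> z \<subseteq> y}"
  let ?X = "{X. X \<subseteq> qcircuits rho \<and> vspan (\<Union>X) \<subseteq> y}"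
  have "(\<Sum>z\<in>?Z. crosscut_sum z) = (\<Sum>z\<in>?Z. \<Sum>X\<in>{X \<in> ?X. vspan (\<Union>X) = z}. (-1) ^ card X)"
    unfolding crosscut_sum_def by (intro sum.cong refl) auto
  also have "\<dots> = (\<Sum>X\<in>?X. (-1) ^ card X)"
  proof (rule sum.group)
    show "(\<lambda>X. vspan (\<Union>X)) ` ?X \<subseteq> ?Z"
      using span_qcircuits_in_qcycles subsp_0[OF subsp_vspan] by blast
  qed simp_all
  also have "?X = Pow {C \<in> qcircuits rho. C \<subseteq> y}"
  proof
    show "?X \<subseteq> Pow {C \<in> qcircuits rho. C \<subseteq> y}" using subset_vspan_Union by blast
    show "Pow {C \<in> qcircuits rho. C \<subseteq> y} \<subseteq> ?X"
      using vspan_Union_subset[OF qcycles_subsp[OF y]] by blast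
  qed
  finally show ?thesis using no_qcircuit_below_iff[OF y] by (simp add: sum_Pow_neg_one_power)
qed

text \<open>The crosscut theorem for the circuits, which are the atoms of the lattice of cycles.\<close>
lemma mobius_qcycles_eq_crosscut_sum:
  "y \<in> qcycles rho \<Longrightarrow> mobius (qcycles rho) {0} y = crosscut_sum y"
  using sum_crosscut_sum_below subsp_0[OF qcycles_subsp]
  by (intro mobius_unique[symmetric]) auto

lemma nullity_cover_of_meet:
  assumes z: "z \<in> qcycles rho" "x \<subset> z" "z \<subseteq> y" and x: "x \<in> qcycles rho"
    and y: "subsp y" and h: "subsp h" "h \<subseteq> y" "nullity rho h + 1 = nullity rho y"
    and meet: "cyclic_part (z \<inter> h) = x"
  shows "nullity rho z = Suc (nullity rho x)"
proof -
  have zs: "subsp z" by (rule qcycles_subsp[OF z(1)])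
  have "nullity rho z + nullity rho h \<le> nullity rho (vsum z h) + nullity rho (z \<inter> h)"
    by (rule nullity_supermod[OF zs h(1)])
  moreover have "nullity rho (z \<inter> h) = nullity rho x"
    using nullity_cyclic_part[OF subsp_Int[OF zs h(1)]] meet by simp
  moreover have "nullity rho (vsum z h) \<le> nullity rho y"
    using nullity_mono[OF vsum_subsp[OF zs h(1)] y] vsum_least[OF zs h(1) y z(3) h(2)] by blast
  moreover have "nullity rho x < nullity rho z" by (rule nullity_strict_mono_qcycles[OF x z(1,2)])
  ultimately show ?thesis using h(3) by linarith
qed

lemma exists_qcycle_nullity_one_below:
  assumes x: "x \<in> qcycles rho" and y: "y \<in> qcycles rho" and xy: "x \<subset> y"
  shows "\<exists>h\<in>qcycles rho. x \<subseteq> h \<and> h \<subset> y \<and> nullity rho h + 1 = nullity rho y"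
proof -
  have xs: "subsp x" and ys: "subsp y" using x y qcycles_subsp by auto
  have "nullity rho x < nullity rho y" by (rule nullity_strict_mono_qcycles[OF x y xy])
  then obtain T where T: "subsp T" "x \<subseteq> T" "T \<subseteq> y" "nullity rho T + 1 = nullity rho y"
    using exists_subsp_with_nullity[OF xs ys, of "nullity rho y - 1"] xy by force
  have "x \<subseteq> cyclic_part T" using cyclic_part_mono[OF T(2)] cyclic_part_qcycle[OF x] by simp
  moreover have "cyclic_part T \<subseteq> y" using cyclic_part_subset[OF T(1)] T(3) by blast
  moreover have "nullity rho (cyclic_part T) + 1 = nullity rho y" using nullity_cyclic_part[OF T(1)] T(4) by simp
  ultimately show ?thesis using cyclic_part_in_qcycles[of T] by auto
qed

text \<open>Rota's sign theorem for the lattice of cycles, graded by nullity; the induction step is Weisner's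
  theorem applied to a cycle \<open>h\<close> of nullity one less than \<open>y\<close>.\<close>
lemma mobius_qcycles_sign:
  assumes x: "x \<in> qcycles rho" and y: "y \<in> qcycles rho" and xy: "x \<subseteq> y"
  shows "0 \<le> (-1) ^ (nullity rho y - nullity rho x) * mobius (qcycles rho) x y"
  using x xy
proof (induction "nullity rho y - nullity rho x" arbitrary: x rule: less_induct)
  case less
  let ?L = "qcycles rho" and ?e = "nullity rho"
  show ?case
  proof (cases "x = y")
    case False
    have ys: "subsp y" by (rule qcycles_subsp[OF y])
    have xy: "x \<subset> y" using less.prems(2) False by blast
    then have lt: "?e x < ?e y" by (rule nullity_strict_mono_qcycles[OF less.prems(1) y])
    obtain h where h: "h \<in> ?L" "x \<subseteq> h" "h \<subset> y" "?e h + 1 = ?e y"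
      using exists_qcycle_nullity_one_below[OF less.prems(1) y xy] by blast
    have hs: "subsp h" by (rule qcycles_subsp[OF h(1)])
    let ?meet = "\<lambda>z. cyclic_part (z \<inter> h)"
    let ?Z = "{z. z \<in> ?L \<and> x \<subset> z \<and> z \<subseteq> y \<and> ?meet z = x}"
    have "{z. z \<in> ?L \<and> x \<subseteq> z \<and> z \<subseteq> y \<and> ?meet z = x} = insert x ?Z"
      using less.prems cyclic_part_qcycle[OF less.prems(1)] h(2) by (auto simp: Int_absorb2)
    then have weisner: "mobius ?L x y + (\<Sum>z\<in>?Z. mobius ?L z y) = 0"
      using mobius_weisner[of ?L ?meet h x y] cyclic_part_in_qcycles subset_cyclic_part_Int_iff
        qcycles_subsp hs h(2,3) less.prems(1) y by simp
    have cover: "?e z = Suc (?e x)" if "z \<in> ?Z" for z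
      using nullity_cover_of_meet[of z x y h] that less.prems(1) ys hs h(3,4) by auto
    have sign: "(-1::int) ^ (?e y - ?e z) = - ((-1) ^ (?e y - ?e x))" if "z \<in> ?Z" for z
    proof -
      have "?e y - ?e x = Suc (?e y - ?e z)" using cover[OF that] lt by simp
      then show ?thesis by simp
    qed
    have "(\<Sum>z\<in>?Z. (-1) ^ (?e y - ?e z) * mobius ?L z y) = (\<Sum>z\<in>?Z. - ((-1) ^ (?e y - ?e x) * mobius ?L z y))"
    proof (rule sum.cong[OF refl])
      fix z assume "z \<in> ?Z"
      then show "(-1) ^ (?e y - ?e z) * mobius ?L z y = - ((-1) ^ (?e y - ?e x) * mobius ?L z y)"
        using sign[of z] by simp
    qed
    also have "\<dots> = - ((-1) ^ (?e y - ?e x) * (\<Sum>z\<in>?Z. mobius ?L z y))"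
      by (simp add: sum_distrib_left sum_negf)
    also have "\<dots> = (-1) ^ (?e y - ?e x) * mobius ?L x y"
    proof -
      have "(\<Sum>z\<in>?Z. mobius ?L z y) = - mobius ?L x y" using weisner by linarith
      then show ?thesis by simp
    qed
    finally have signed: "(\<Sum>z\<in>?Z. (-1) ^ (?e y - ?e z) * mobius ?L z y) = (-1) ^ (?e y - ?e x) * mobius ?L x y" .
    have "0 \<le> (-1) ^ (?e y - ?e z) * mobius ?L z y" if z: "z \<in> ?Z" for z
      using less.hyps[of z] cover[OF z] lt z by simp
    then show ?thesis unfolding signed[symmetric] by (rule sum_nonneg)
  qed simp
qed

section \<open>The Euler characteristic of the order complex\<close>

lemma indep_subset: "indep rho V \<Longrightarrow> subsp U \<Longrightarrow> U \<subseteq> V \<Longrightarrow> indep rho U"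
  using nullity_mono[of U V] unfolding indep_iff_nullity_eq_0 by fastforce

lemma order_complex_eq_chains: "order_complex rho = chains {V. indep rho V \<and> V \<noteq> {0}}"
  unfolding order_complex_def chains_def chain_subset_def by auto

lemma euler_char_eq_sum_indep:
  "real_of_int (euler_char rho) = - (\<Sum>V | indep rho V. qmu CARD('a) (vdim V))"
proof -
  let ?F = "{V. indep rho V \<and> V \<noteq> {0}}"
  have proper: "{U \<in> ?F. U \<subset> V} = {U. subsp U \<and> U \<noteq> {0} \<and> U \<subset> V}" if "V \<in> ?F" for V
    using that indep_subset by (auto simp: indep_def)
  have "real_of_int (euler_char rho) = - (\<Sum>C\<in>chains ?F. (-1) ^ card C)"
    unfolding euler_char_def order_complex_eq_chains by (simp add: sum_negf)
  also have "(\<Sum>C\<in>chains ?F. (-1) ^ card C) = 1 - (\<Sum>V\<in>?F. \<Sum>D\<in>chains {U \<in> ?F. U \<subset> V}. (-1) ^ card D :: real)"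
    by (rule sum_chains_neg_one_power)
  also have "(\<Sum>V\<in>?F. \<Sum>D\<in>chains {U \<in> ?F. U \<subset> V}. (-1) ^ card D) = (\<Sum>V\<in>?F. - qmu CARD('a) (vdim V))"
  proof (rule sum.cong[OF refl])
    fix V assume V: "V \<in> ?F"
    then show "(\<Sum>D\<in>chains {U \<in> ?F. U \<subset> V}. (-1) ^ card D) = - qmu CARD('a) (vdim V)"
      unfolding proper[OF V] using sum_chains_proper_nonzero_subspaces[of V] by (simp add: indep_def)
  qed
  finally have "real_of_int (euler_char rho) = - (1 + (\<Sum>V\<in>?F. qmu CARD('a) (vdim V)))"
    by (simp add: sum_negf)
  moreover have "{V. indep rho V} = insert {0} ?F" using subsp_zero by (auto simp: indep_def)
  ultimately show ?thesis by (simp add: qmu_def binomial_eq_0)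
qed

lemma sum_indep_inclusion_exclusion:
  fixes f :: "('a^'n) set \<Rightarrow> 'r::comm_ring_1"
  shows "(\<Sum>V | indep rho V. f V)
     = (\<Sum>X\<in>Pow (qcircuits rho). (-1) ^ card X * (\<Sum>V | subsp V \<and> vspan (\<Union>X) \<subseteq> V. f V))"
proof -
  let ?S = "{V :: ('a^'n) set. subsp V}"
  have "{V. indep rho V} = {V. V \<in> ?S \<and> (\<forall>C\<in>qcircuits rho. \<not> C \<subseteq> V)}"
    using indep_iff_no_qcircuit by (auto simp: indep_def)
  then have "(\<Sum>V | indep rho V. f V)
      = (\<Sum>X\<in>Pow (qcircuits rho). (-1) ^ card X * (\<Sum>V | V \<in> ?S \<and> \<Union>X \<subseteq> V. f V))"
    using sum_avoiding_inclusion_exclusion[of "qcircuits rho" ?S f] by simp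
  also have "\<dots> = (\<Sum>X\<in>Pow (qcircuits rho). (-1) ^ card X * (\<Sum>V | subsp V \<and> vspan (\<Union>X) \<subseteq> V. f V))"
  proof (rule sum.cong[OF refl])
    fix X
    have "{V. V \<in> ?S \<and> \<Union>X \<subseteq> V} = {V. subsp V \<and> vspan (\<Union>X) \<subseteq> V}"
      using vspan_Union_subset subset_vspan_Union by blast
    then show "(-1) ^ card X * (\<Sum>V | V \<in> ?S \<and> \<Union>X \<subseteq> V. f V)
        = (-1) ^ card X * (\<Sum>V | subsp V \<and> vspan (\<Union>X) \<subseteq> V. f V)" by simp
  qed
  finally show ?thesis .
qed

lemma euler_char_eq_sum_Pow_qcircuits:
  "real_of_int (euler_char rho)
     = - (\<Sum>X\<in>Pow (qcircuits rho). (-1) ^ card X * qmu_above CARD('a) CARD('n) (CARD('n) - vdim (vspan (\<Union>X))))"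
  unfolding euler_char_eq_sum_indep sum_indep_inclusion_exclusion
  by (simp add: sum_qmu_superspaces subsp_vspan)

lemma coloop_imp_qcircuit_subset_orth:
  assumes l: "coloop rho l" and C: "C \<in> qcircuits rho"
  shows "C \<subseteq> orth l"
proof (rule ccontr)
  let ?H = "orth l"
  assume "\<not> C \<subseteq> ?H"
  then have "nullity rho ?H < nullity rho (vsum ?H C)" by (rule nullity_vsum_qcircuit[OF C subsp_orth])
  also have "\<dots> \<le> nullity rho UNIV"
    using nullity_mono[OF vsum_subsp[OF subsp_orth] subsp_UNIV] qcircuitsD[OF C] by blast
  also have "\<dots> = nullity rho ?H"
  proof -
    have ls: "subsp l" "vdim l = 1" "dual_rank rho l = 0" using l unfolding coloop_def by auto
    then have "vdim ?H + 1 = CARD('n)" using vdim_orth[OF ls(1)] by simp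
    moreover have "rho ?H + 1 = rho UNIV" using ls unfolding dual_rank_def by simp
    ultimately show ?thesis using vdim_UNIV[where 'a='a and 'n='n] unfolding nullity_def by simp
  qed
  finally show False by simp
qed

lemma coloop_imp_not_spanning:
  assumes "coloop rho l" and "X \<subseteq> qcircuits rho"
  shows "vspan (\<Union>X) \<noteq> UNIV"
proof -
  have "vspan (\<Union>X) \<subseteq> orth l"
    using assms coloop_imp_qcircuit_subset_orth by (intro vspan_Union_subset[OF subsp_orth]) auto
  moreover have "orth l \<noteq> UNIV"
    using assms(1) vdim_orth[of l] vdim_UNIV[where 'a='a and 'n='n] unfolding coloop_def by auto
  ultimately show ?thesis by blast
qed

text \<open>If the circuits do not span \<open>E\<close>, the orthogonal complement of a hyperplane containing them is a
  coloop.\<close>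
lemma UNIV_in_qcycles_if_no_coloop:
  assumes "\<nexists>l. coloop rho l"
  shows "UNIV \<in> qcycles rho"
proof -
  have "cyclic_part UNIV = UNIV"
  proof (rule ccontr)
    assume "cyclic_part UNIV \<noteq> UNIV"
    then have lt: "vdim (cyclic_part UNIV) < vdim (UNIV :: ('a^'n) set)"
      using vdim_psubset[OF subsp_cyclic_part subsp_UNIV] by blast
    then have le: "vdim (cyclic_part UNIV) \<le> vdim (UNIV :: ('a^'n) set) - 1" by simp
    obtain H where H: "subsp H" "cyclic_part UNIV \<subseteq> H" "vdim H = vdim (UNIV :: ('a^'n) set) - 1"
      using exists_intermediate_subsp[OF subsp_cyclic_part[of UNIV] subsp_UNIV subset_UNIV le] by auto
    then have dim_H: "vdim (UNIV :: ('a^'n) set) = Suc (vdim H)" using lt by simp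
    have "C \<subseteq> H" if "C \<in> qcircuits rho" for C
      using qcircuit_subset_cyclic_part[OF that subset_UNIV] H(2) by blast
    then have "rho H \<noteq> rho UNIV"
      using exists_qcircuit_not_in_hyperplane[OF H(1) subsp_UNIV subset_UNIV dim_H] by blast
    then have "rho UNIV = Suc (rho H)"
      using rank_mono[OF H(1) subsp_UNIV] rank_Suc_dim_le[OF H(1) subsp_UNIV subset_UNIV dim_H] by simp
    moreover have "vdim (orth H) = 1" using vdim_orth[OF H(1)] dim_H vdim_UNIV[where 'a='a and 'n='n] by simp
    ultimately have "coloop rho (orth H)"
      unfolding coloop_def dual_rank_def using subsp_orth orth_orth[OF H(1)] by simp
    then show False using assms by blast
  qed
  then show ?thesis using cyclic_part_in_qcycles[of UNIV] by simp
qed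

lemma mu_bar_eq_crosscut_sum:
  "real (mu_bar rho) = (-1) ^ (CARD('n) - rho UNIV) * real_of_int (crosscut_sum UNIV)"
proof (cases "\<exists>l. coloop rho l")
  case True
  then have "{X. X \<subseteq> qcircuits rho \<and> vspan (\<Union>X) = UNIV} = {}" using coloop_imp_not_spanning by blast
  then have "crosscut_sum UNIV = 0" unfolding crosscut_sum_def by (simp only: sum.empty)
  then show ?thesis using True by (simp add: mu_bar_def)
next
  case False
  let ?L = "qcycles rho"
  have top: "UNIV \<in> ?L" by (rule UNIV_in_qcycles_if_no_coloop[OF False])
  have "(THE t. t \<in> ?L \<and> (\<forall>c\<in>?L. c \<subseteq> t)) = UNIV" by (rule the_equality) (use top in auto)
  then have mu: "mu_L rho = crosscut_sum UNIV"
    unfolding mu_L_def using mobius_qcycles_eq_crosscut_sum[OF top] by simp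
  have "nullity rho UNIV - nullity rho {0} = CARD('n) - rho UNIV"
    unfolding nullity_def using vdim_UNIV[where 'a='a and 'n='n] by simp
  then have "0 \<le> (-1) ^ (CARD('n) - rho UNIV) * crosscut_sum UNIV"
    using mobius_qcycles_sign[OF zero_in_qcycles top] mobius_qcycles_eq_crosscut_sum[OF top] by simp
  moreover have "\<bar>(-1) ^ (CARD('n) - rho UNIV) * crosscut_sum UNIV\<bar> = \<bar>crosscut_sum UNIV\<bar>"
    by (simp add: abs_mult)
  ultimately have "\<bar>crosscut_sum UNIV\<bar> = (-1) ^ (CARD('n) - rho UNIV) * crosscut_sum UNIV" by simp
  then show ?thesis using False mu by (simp add: mu_bar_def)
qed

lemma signed_mu_bar_eq:
  "(-1) powi (int (rho UNIV) - 1) * real CARD('a) ^ (CARD('n) choose 2) * real (mu_bar rho)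
     = - (real_of_int (crosscut_sum UNIV) * qmu CARD('a) CARD('n))"
proof -
  have "rho UNIV \<le> CARD('n)" using rank_le_dim[OF subsp_UNIV] vdim_UNIV[where 'a='a and 'n='n] by simp
  then have "(-1::real) ^ rho UNIV * (-1) ^ (CARD('n) - rho UNIV) = (-1) ^ CARD('n)" by (simp flip: power_add)
  then show ?thesis by (simp add: mu_bar_eq_crosscut_sum neg_one_powi_int_minus_one qmu_def algebra_simps)
qed

lemma sum_proper_qcircuit_sets_by_codim_card:
  fixes g :: "nat \<Rightarrow> real"
  shows "(\<Sum>X | X \<subseteq> qcircuits rho \<and> X \<noteq> {} \<and> vspan (\<Union>X) \<noteq> UNIV.
            (-1) ^ card X * g (CARD('n) - vdim (vspan (\<Union>X))))
       = (\<Sum>l=1..CARD('n)-1. \<Sum>i=1..card (qcircuits rho). real (lam rho i l) * ((-1) ^ i * g l))"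
proof -
  let ?n = "CARD('n)" and ?s = "card (qcircuits rho)"
  let ?O = "{X. X \<subseteq> qcircuits rho \<and> X \<noteq> {} \<and> vspan (\<Union>X) \<noteq> UNIV}"
  let ?f = "\<lambda>X. (-1) ^ card X * g (?n - vdim (vspan (\<Union>X)))"
  define p where "p X = (?n - vdim (vspan (\<Union>X)), card X)" for X :: "('a^'n) set set"
  have "p ` ?O \<subseteq> {1..?n-1} \<times> {1..?s}"
  proof (rule image_subsetI)
    fix X assume X: "X \<in> ?O"
    then obtain C where C: "C \<in> X" by blast
    then have "vdim C \<le> vdim (vspan (\<Union>X))" by (intro vdim_mono subset_vspan_Union)
    moreover have "vdim C \<noteq> 0"
      using vdim_eq_0_iff[of C] qcircuitsD[of C] qcircuit_nonzero[of C] C X by auto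
    moreover have "vspan (\<Union>X) \<subset> UNIV" using X by auto
    then have "vdim (vspan (\<Union>X)) < ?n"
      using vdim_psubset[OF subsp_vspan subsp_UNIV] vdim_UNIV[where 'a='a and 'n='n] by metis
    ultimately have "?n - vdim (vspan (\<Union>X)) \<in> {1..?n-1}" by auto
    moreover have "card X \<in> {1..?s}"
      using X card_mono[of "qcircuits rho" X] by (simp add: Suc_le_eq card_gt_0_iff)
    ultimately show "p X \<in> {1..?n-1} \<times> {1..?s}" unfolding p_def by simp
  qed
  then have "(\<Sum>X\<in>?O. ?f X) = (\<Sum>y\<in>{1..?n-1} \<times> {1..?s}. \<Sum>X\<in>{X \<in> ?O. p X = y}. ?f X)"
    by (intro sum.group[symmetric]) simp_all
  also have "\<dots> = (\<Sum>y\<in>{1..?n-1} \<times> {1..?s}. real (lam rho (snd y) (fst y)) * ((-1) ^ snd y * g (fst y)))"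
  proof (rule sum.cong[OF refl])
    fix y assume y: "y \<in> {1..?n-1} \<times> {1..?s}"
    obtain l i where li: "y = (l, i)" by fastforce
    have "{X \<in> ?O. p X = y} = {X. X \<subseteq> qcircuits rho \<and> card X = i \<and> ?n - vdim (vspan (\<Union>X)) = l}"
      using y vdim_UNIV[where 'a='a and 'n='n] unfolding li p_def by auto
    moreover have "?f X = (-1) ^ i * g l" if "X \<in> {X \<in> ?O. p X = y}" for X
      using that unfolding li p_def by simp
    ultimately show "(\<Sum>X\<in>{X \<in> ?O. p X = y}. ?f X) = real (lam rho (snd y) (fst y)) * ((-1) ^ snd y * g (fst y))"
      unfolding li lam_def by simp
  qed
  also have "\<dots> = (\<Sum>l=1..?n-1. \<Sum>i=1..?s. real (lam rho i l) * ((-1) ^ i * g l))"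
    unfolding sum.cartesian_product by (simp add: split_beta)
  finally show ?thesis .
qed

lemma sum_Pow_qcircuits_by_codim:
  fixes g :: "nat \<Rightarrow> real"
  shows "(\<Sum>X\<in>Pow (qcircuits rho). (-1) ^ card X * g (CARD('n) - vdim (vspan (\<Union>X))))
       = g CARD('n) + real_of_int (crosscut_sum UNIV) * g 0
         + (\<Sum>l=1..CARD('n)-1. \<Sum>i=1..card (qcircuits rho). real (lam rho i l) * ((-1) ^ i * g l))"
proof -
  let ?f = "\<lambda>X :: ('a^'n) set set. (-1) ^ card X * g (CARD('n) - vdim (vspan (\<Union>X)))"
  let ?U = "{X. X \<subseteq> qcircuits rho \<and> vspan (\<Union>X) = UNIV}"
  let ?O = "{X. X \<subseteq> qcircuits rho \<and> X \<noteq> {} \<and> vspan (\<Union>X) \<noteq> UNIV}"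
  have span_empty: "vspan (\<Union>({} :: ('a^'n) set set)) = {0}" by (simp add: vspan_vec)
  then have "Pow (qcircuits rho) = insert {} (?U \<union> ?O)" "{} \<notin> ?U \<union> ?O" "?U \<inter> ?O = {}"
    using UNIV_neq_zero by auto
  then have "(\<Sum>X\<in>Pow (qcircuits rho). ?f X) = ?f {} + (\<Sum>X\<in>?U. ?f X) + (\<Sum>X\<in>?O. ?f X)"
    by (simp add: sum.union_disjoint)
  moreover have "?f {} = g CARD('n)" using span_empty by simp
  moreover have "(\<Sum>X\<in>?U. ?f X) = real_of_int (crosscut_sum UNIV) * g 0"
    by (simp add: crosscut_sum_def vdim_UNIV sum_distrib_right)
  ultimately show ?thesis using sum_proper_qcircuit_sets_by_codim_card[of g] by simp
qed

end

lemma sum_signed_qbinom_eq_qmu_above: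
  assumes "1 \<le> i" "l \<le> n"
  shows "(\<Sum>j=0..l. (-1) ^ (n + i + j - 1) * real q ^ ((n - j) choose 2) * qbinom q l j)
       = - ((-1) ^ i * qmu_above q n l)"
proof -
  have sign: "(-1::real) ^ (n + i + j - 1) = - ((-1) ^ i * (-1) ^ (n - j))" if "j \<le> l" for j
  proof -
    obtain i' where i: "i = Suc i'" using assms(1) by (cases i) auto
    have "n + i + j - 1 = (n - j) + i' + 2 * j" using i that assms(2) by simp
    then have "(-1::real) ^ (n + i + j - 1) = (-1) ^ (n - j) * (-1) ^ i'" by (simp add: power_add power_mult)
    then show ?thesis using i by simp
  qed
  have "(\<Sum>j=0..l. (-1) ^ (n + i + j - 1) * real q ^ ((n - j) choose 2) * qbinom q l j)
      = (\<Sum>j=0..l. - ((-1) ^ i * (qbinom q l j * qmu q (n - j))))"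
  proof (rule sum.cong[OF refl])
    fix j assume "j \<in> {0..l}"
    then show "(-1) ^ (n + i + j - 1) * real q ^ ((n - j) choose 2) * qbinom q l j
        = - ((-1) ^ i * (qbinom q l j * qmu q (n - j)))"
      using sign[of j] by (simp add: qmu_def)
  qed
  then show ?thesis unfolding qmu_above_def by (simp add: sum_negf sum_distrib_left)
qed

theorem theorem4p2:
  fixes rho :: "('a::{finite,field} ^ 'n::finite) set \<Rightarrow> nat"
  assumes "qmatroid rho"
  defines "q \<equiv> CARD('a)" and "n \<equiv> CARD('n)" and "r \<equiv> rho UNIV"
      and "s \<equiv> card (qcircuits rho)"
  shows "real_of_int (euler_char rho) =
     (-1) powi (int r - 1) * real q ^ (n choose 2) * real (mu_bar rho)
     + (\<Sum>l=1..n-1. \<Sum>i=1..s. real (lam rho i l) *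
          (\<Sum>j=0..l. (-1) ^ (n + i + j - 1) * real q ^ ((n - j) choose 2) * qbinom q l j))"
proof -
  interpret q_matroid rho by (rule q_matroid.intro) fact
  have "(-1) powi (int r - 1) * real q ^ (n choose 2) * real (mu_bar rho)
      = - (real_of_int (crosscut_sum UNIV) * qmu_above q n 0)"
    using signed_mu_bar_eq by (simp add: q_def n_def r_def)
  moreover have "real_of_int (euler_char rho) = - (real_of_int (crosscut_sum UNIV) * qmu_above q n 0
      + (\<Sum>l=1..n-1. \<Sum>i=1..s. real (lam rho i l) * ((-1) ^ i * qmu_above q n l)))"
    unfolding euler_char_eq_sum_Pow_qcircuits sum_Pow_qcircuits_by_codim qmu_above_full
    by (simp add: q_def n_def s_def)
  moreover have "(\<Sum>l=1..n-1. \<Sum>i=1..s. real (lam rho i l) *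
          (\<Sum>j=0..l. (-1) ^ (n + i + j - 1) * real q ^ ((n - j) choose 2) * qbinom q l j))
      = - (\<Sum>l=1..n-1. \<Sum>i=1..s. real (lam rho i l) * ((-1) ^ i * qmu_above q n l))"
    unfolding sum_negf[symmetric] by (intro sum.cong refl) (subst sum_signed_qbinom_eq_qmu_above; auto)
  ultimately show ?thesis by simp
qed

end
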